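(* Let $(X_1,Y_1),(X_2,Y_2),\dots$ be a random sample (i.i.d. copies) of a random vector $(X,Y)$ with continuous joint distribution function $H$, marginal distribution functions $F$ and $G$, and (unique) copula $A$. Assume that $A$ allows a continuous Markov kernel $K_A$ and define $K_H(x,(-\infty,y]):=K_A(F(x),[0,G(y)])$ for $x,y\in\mathbb{R}$. Let $F_n,G_n$ be the univariate empirical distribution functions and $E_n$ the empirical copula of $(X_1,Y_1),\dots,(X_n,Y_n)$, and set $N(n):=\lfloor n^s\rfloor$ for some $s\in(0,\tfrac12)$. Then, almost surely, $$\lim_{n\to\infty}\sup_{(x,y)\in\mathbb{R}^2}\left|K_{\mathcal{CB}_{N(n)}(E_n)}(F_n(x),[0,G_n(y)])-K_H(x,(-\infty,y])\right|=0.$$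
   Context: A (bivariate) copula is a distribution function on $[0,1]^2$ with uniform marginals; each copula $B$ corresponds to a doubly stochastic measure $\mu_B$ with $B(x,y)=\mu_B([0,x]\times[0,y])$. A Markov kernel of a copula $B$ is a map $K_B:[0,1]\times\mathcal{B}([0,1])\to[0,1]$ such that $x\mapsto K_B(x,E)$ is measurable for each Borel $E$, $E\mapsto K_B(x,E)$ is a probability measure for each $x$, and $\int_{E_1}K_B(x,E_2)\,d\lambda(x)=\mu_B(E_1\times E_2)$ for all Borel $E_1,E_2\subseteq[0,1]$ ($\lambda$ = Lebesgue measure). A copula $A$ allows a continuous Markov kernel if it has a version $K_A$ of its Markov kernel such that $(x,y)\mapsto K_A(x,[0,y])$ is continuous on $[0,1]^2$; $K_A$ denotes this version. Checkerboard approximation: for $N\in\mathbb{N}$ let $I_1^N=[0,\tfrac1N]$, $I_i^N=(\tfrac{i-1}N,\tfrac iN]$ for $i=2,\dots,N$, and $Q_{i,j}^N=I_i^N\times I_j^N$. For a copula $B$, $\mathcal{CB}_N(B)$ is the absolutely continuous copula with density $N^2\sum_{i,j=1}^N\mu_B(Q^N_{i,j})\mathbf 1_{Q^N_{i,j}}$, and its Markov kernel is taken to be the version $K_{\mathcal{CB}_N(B)}(x,[0,y])=N^2\sum_{i,j=1}^N\mu_B(Q^N_{i,j})\mathbf 1_{I^N_i}(x)\,\lambda([0,y]\cap I^N_j)$ for $(x,y)\in[0,1]^2$. Empirical copula: with $H_n$ the bivariate empirical distribution function of the first $n$ observations, almost surely there are no ties and there is a unique subcopula $E_n'$ on $\{0,\tfrac1n,\dots,1\}^2$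 with $H_n(x,y)=E_n'(F_n(x),G_n(y))$ for all $(x,y)$; $E_n$ is the copula extending $E_n'$ by bilinear interpolation on each square $[\tfrac{i-1}n,\tfrac in]\times[\tfrac{j-1}n,\tfrac jn]$. *)

theory Defs
  imports "HOL-Probability.Probability"
begin

text \<open>A (bivariate) copula, as a function on the unit square (values outside are irrelevant):
  grounded, uniform margins, 2-increasing.\<close>
definition is_copula :: "(real \<Rightarrow> real \<Rightarrow> real) \<Rightarrow> bool" where
  "is_copula C \<longleftrightarrow>
     (\<forall>u\<in>{0..1}. C u 0 = 0 \<and> C 0 u = 0 \<and> C u 1 = u \<and> C 1 u = u) \<and>
     (\<forall>u1 u2 v1 v2. 0 \<le> u1 \<and> u1 \<le> u2 \<and> u2 \<le> 1 \<and> 0 \<le> v1 \<and> v1 \<le> v2 \<and> v2 \<le> 1 \<longrightarrow>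
        C u2 v2 - C u1 v2 - C u2 v1 + C u1 v1 \<ge> 0)"

definition copula_measure :: "(real \<Rightarrow> real \<Rightarrow> real) \<Rightarrow> (real \<times> real) measure \<Rightarrow> bool" where
  "copula_measure C \<mu> \<longleftrightarrow>
     sets \<mu> = sets (borel :: (real \<times> real) measure) \<and>
     emeasure \<mu> (- ({0..1} \<times> {0..1})) = 0 \<and>
     (\<forall>x\<in>{0..1}. \<forall>y\<in>{0..1}. emeasure \<mu> ({0..x} \<times> {0..y}) = ennreal (C x y))"

text \<open>K is a Markov kernel of the copula C; K x is the probability measure E \<mapsto> K(x,E)
  on the Borel sets of [0,1].\<close>
definition markov_kernel_of :: "(real \<Rightarrow> real \<Rightarrow> real) \<Rightarrow> (real \<Rightarrow> real measure) \<Rightarrow> bool" where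
  "markov_kernel_of C K \<longleftrightarrow>
     (\<exists>\<mu>. copula_measure C \<mu> \<and>
       (\<forall>x\<in>{0..1}. prob_space (K x) \<and> sets (K x) = sets (restrict_space borel {0..1::real})) \<and>
       (\<forall>E\<in>sets (restrict_space borel {0..1::real}).
           (\<lambda>x. measure (K x) E) \<in> borel_measurable (restrict_space borel {0..1::real})) \<and>
       (\<forall>E1\<in>sets (restrict_space borel {0..1::real}). \<forall>E2\<in>sets (restrict_space borel {0..1::real}).
           (LINT x:E1|lborel. measure (K x) E2) = measure \<mu> (E1 \<times> E2)))"

definition continuous_markov_kernel_of :: "(real \<Rightarrow> real \<Rightarrow> real) \<Rightarrow> (real \<Rightarrow> real measure) \<Rightarrow> bool" where
  "continuous_markov_kernel_of C K \<longleftrightarrow>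
     markov_kernel_of C K \<and>
     continuous_on ({0..1} \<times> {0..1}) (\<lambda>(x,y). measure (K x) {0..y})"

definition cb_int :: "nat \<Rightarrow> nat \<Rightarrow> real set" where
  "cb_int N i = (if i = 1 then {0..1 / real N} else {(real i - 1) / real N <.. real i / real N})"

text \<open>mu_B(Q_{i,j}^N) for a copula B, written out by inclusion-exclusion
  (exact, since B is grounded).\<close>
definition cb_mass :: "nat \<Rightarrow> (real \<Rightarrow> real \<Rightarrow> real) \<Rightarrow> nat \<Rightarrow> nat \<Rightarrow> real" where
  "cb_mass N B i j =
     B (real i / real N) (real j / real N) - B ((real i - 1) / real N) (real j / real N)
   - B (real i / real N) ((real j - 1) / real N) + B ((real i - 1) / real N) ((real j - 1) / real N)"

text \<open>The chosen version of the Markov kernel of CB_N(B): K(x,[0,y]).\<close>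
definition cb_kernel :: "nat \<Rightarrow> (real \<Rightarrow> real \<Rightarrow> real) \<Rightarrow> real \<Rightarrow> real \<Rightarrow> real" where
  "cb_kernel N B x y =
     real N ^ 2 * (\<Sum>i\<in>{1..N}. \<Sum>j\<in>{1..N}.
        cb_mass N B i j * indicator (cb_int N i) x * measure lborel ({0..y} \<inter> cb_int N j))"

definition emp_df :: "(nat \<Rightarrow> real) \<Rightarrow> nat \<Rightarrow> real \<Rightarrow> real" where
  "emp_df Z n x = card {k. k < n \<and> Z k \<le> x} / real n"

text \<open>The empirical subcopula E_n' at grid point (i/n, j/n) (valid in the absence of ties,
  which holds almost surely): H_n(x,y) = E_n'(F_n x, G_n y).\<close>
definition emp_subcopula :: "(nat \<Rightarrow> real) \<Rightarrow> (nat \<Rightarrow> real) \<Rightarrow> nat \<Rightarrow> nat \<Rightarrow> nat \<Rightarrow> real" where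
  "emp_subcopula X Y n i j =
     card {k. k < n \<and> card {l. l < n \<and> X l \<le> X k} \<le> i \<and> card {l. l < n \<and> Y l \<le> Y k} \<le> j} / real n"

text \<open>Bilinear interpolation of grid values C(a,b) ~ value at (a/n, b/n), on [0,1]^2.\<close>
definition bilinear_ext :: "nat \<Rightarrow> (nat \<Rightarrow> nat \<Rightarrow> real) \<Rightarrow> real \<Rightarrow> real \<Rightarrow> real" where
  "bilinear_ext n C u v =
    (let a = min (n - 1) (nat \<lfloor>real n * u\<rfloor>); t = real n * u - real a;
         b = min (n - 1) (nat \<lfloor>real n * v\<rfloor>); s = real n * v - real b
     in (1 - t) * (1 - s) * C a b + t * (1 - s) * C (a + 1) b
        + (1 - t) * s * C a (b + 1) + t * s * C (a + 1) (b + 1))"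

definition emp_copula :: "(nat \<Rightarrow> real) \<Rightarrow> (nat \<Rightarrow> real) \<Rightarrow> nat \<Rightarrow> real \<Rightarrow> real \<Rightarrow> real" where
  "emp_copula X Y n = bilinear_ext n (emp_subcopula X Y n)"

end

(*
  At a point (x, y), with u = F_n x in the i-th column of the N-grid, summation by parts writes the
  checkerboard kernel of CB_N(E_n) as a convex combination of the difference quotients
  N (E_n(i/N, j/N) - E_n((i-1)/N, j/N)) over the rows j with |j/N - G_n y| <= 1/N.  Replacing E_n by A
  changes each quotient by at most 2 N sup|E_n - A|, and the quotient for A is the average of
  K_A(t, [0, j/N]) over the i-th column, hence close to K_A(F x, [0, G y]) by uniform continuity of K_A,
  since F_n and G_n are uniformly close to F and G.  In the absence of ties (almost sure, as F and G are
  continuous) sup|E_n - A| is controlled by the uniform errors of H_n, F_n and G_n.  Hoeffding's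
  inequality on an equiprobable quantile grid of about n^s lines and Borel-Cantelli show that these
  errors are o(n^(-s)) almost surely for s < 1/2; so with N = floor(n^s) all error terms vanish.
*)
theory Submission
  imports Defs "HOL-Real_Asymp.Real_Asymp"
begin

section \<open>Copulas and their Markov kernels\<close>

lemma is_copula_boundary:
  assumes "is_copula A" "u \<in> {0..1}"
  shows "A u 0 = 0" "A 0 u = 0" "A u 1 = u" "A 1 u = u"
  using assms unfolding is_copula_def by auto

lemma is_copula_transpose:
  assumes "is_copula A"
  shows "is_copula (\<lambda>u v. A v u)"
  using assms unfolding is_copula_def by (smt (verit))

lemma copula_increment_bounds:
  assumes "is_copula A" "0 \<le> u1" "u1 \<le> u2" "u2 \<le> 1" "v \<in> {0..1}"
  shows "0 \<le> A u2 v - A u1 v" "A u2 v - A u1 v \<le> u2 - u1"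
proof -
  have rect: "A u2 v2 - A u1 v2 - A u2 v1 + A u1 v1 \<ge> 0" if "0 \<le> v1" "v1 \<le> v2" "v2 \<le> 1" for v1 v2
    using assms(1-4) that unfolding is_copula_def by blast
  show "0 \<le> A u2 v - A u1 v"
    using rect[of 0 v] assms is_copula_boundary[OF assms(1), of u1] is_copula_boundary[OF assms(1), of u2]
    by auto
  show "A u2 v - A u1 v \<le> u2 - u1"
    using rect[of v 1] assms is_copula_boundary[OF assms(1), of u1] is_copula_boundary[OF assms(1), of u2]
    by auto
qed

lemma copula_lipschitz:
  assumes "is_copula A" "u \<in> {0..1}" "u' \<in> {0..1}" "v \<in> {0..1}" "v' \<in> {0..1}"
  shows "\<bar>A u v - A u' v'\<bar> \<le> \<bar>u - u'\<bar> + \<bar>v - v'\<bar>"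
proof -
  have lip: "\<bar>C x y - C x' y\<bar> \<le> \<bar>x - x'\<bar>"
    if "is_copula C" "x \<in> {0..1}" "x' \<in> {0..1}" "y \<in> {0..1}" for C x x' y
    using copula_increment_bounds[OF that(1), of x x' y] copula_increment_bounds[OF that(1), of x' x y] that
    by (cases "x \<le> x'") auto
  show ?thesis
    using lip[OF assms(1,2,3,4)] lip[OF is_copula_transpose[OF assms(1)] assms(4,5,3)] by linarith
qed

lemma copula_measure_strip:
  assumes "is_copula A" "copula_measure A \<mu>" "0 \<le> a" "a \<le> b" "b \<le> 1" "w \<in> {0..1}"
  shows "measure \<mu> ({a<..b} \<times> {0..w}) = A b w - A a w"
proof -
  have sets_\<mu>: "S \<times> T \<in> sets \<mu>" if "S \<in> sets borel" "T \<in> sets borel" for S T :: "real set"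
    using assms(2) that unfolding copula_measure_def by (simp add: borel_prod[symmetric])
  have corner: "emeasure \<mu> ({0..x} \<times> {0..w}) = ennreal (A x w)" if "x \<in> {0..1}" for x
    using assms(2,6) that unfolding copula_measure_def by auto
  have "ennreal (A a w) + emeasure \<mu> ({a<..b} \<times> {0..w})
      = emeasure \<mu> ({0..a} \<times> {0..w}) + emeasure \<mu> ({a<..b} \<times> {0..w})"
    using corner assms(3-5) by simp
  also have "\<dots> = emeasure \<mu> ({0..a} \<times> {0..w} \<union> {a<..b} \<times> {0..w})"
    by (rule plus_emeasure) (auto intro: sets_\<mu>)
  also have "{0..a} \<times> {0..w} \<union> {a<..b} \<times> {0..w} = {0..b} \<times> {0..w}"
    using assms(3,4) by auto
  finally have "ennreal (A b w) = ennreal (A a w) + emeasure \<mu> ({a<..b} \<times> {0..w})"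
    using corner assms(3-5) by simp
  moreover have "0 \<le> A a w"
    using copula_increment_bounds(1)[OF assms(1), of 0 a w] is_copula_boundary[OF assms(1) assms(6)] assms
    by auto
  ultimately have "emeasure \<mu> ({a<..b} \<times> {0..w}) = ennreal (A b w - A a w)"
    by (metis add_diff_eq_ennreal ennreal_minus ennreal_add_diff_cancel_left ennreal_neq_top)
  then show ?thesis
    using copula_increment_bounds(1)[OF assms(1,3,4,5,6)] by (simp add: measure_def)
qed

lemma markov_kernel_strip_integral:
  assumes "is_copula A" "markov_kernel_of A K" "0 \<le> a" "a \<le> b" "b \<le> 1" "w \<in> {0..1}"
  shows "(LINT t:{a<..b}|lborel. measure (K t) {0..w}) = A b w - A a w"
proof -
  obtain \<mu> where "copula_measure A \<mu>" and disintegration: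
    "\<And>E1 E2. E1 \<in> sets (restrict_space borel {0..1}) \<Longrightarrow> E2 \<in> sets (restrict_space borel {0..1}) \<Longrightarrow>
       (LINT x:E1|lborel. measure (K x) E2) = measure \<mu> (E1 \<times> E2)"
    using assms(2) unfolding markov_kernel_of_def by blast
  moreover have "{a<..b} \<in> sets (restrict_space borel {0..1})" "{0..w} \<in> sets (restrict_space borel {0..1})"
    using assms by (auto simp: sets_restrict_space_iff)
  ultimately show ?thesis
    using copula_measure_strip[OF assms(1) _ assms(3-6)] by simp
qed

lemma continuous_markov_kernel_average:
  assumes "is_copula A" "continuous_markov_kernel_of A K" "0 \<le> a" "a \<le> b" "b \<le> 1" "w \<in> {0..1}"
    and close: "\<And>t. t \<in> {a..b} \<Longrightarrow> \<bar>measure (K t) {0..w} - c\<bar> \<le> \<epsilon>"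
  shows "\<bar>(A b w - A a w) - (b - a) * c\<bar> \<le> (b - a) * \<epsilon>"
proof -
  let ?f = "\<lambda>t. measure (K t) {0..w}"
  have "continuous_on {a..b} ((\<lambda>(x, y). measure (K x) {0..y}) \<circ> (\<lambda>t. (t, w)))"
    using assms(2-6) unfolding continuous_markov_kernel_of_def
    by (intro continuous_on_compose continuous_intros) (auto elim: continuous_on_subset)
  then have "set_integrable lborel {a..b} ?f"
    by (intro borel_integrable_atLeastAtMost') (simp add: o_def)
  then have f_int: "set_integrable lborel {a<..b} ?f"
    by (rule set_integrable_subset) auto
  have const_int: "set_integrable lborel {a<..b} (\<lambda>_. k)" for k :: real
    by (rule set_integrable_subset[OF borel_integrable_atLeastAtMost'[of a b "\<lambda>_. k"]]) auto
  have const: "(LINT t:{a<..b}|lborel. k) = (b - a) * k" for k :: real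
    using assms(4) by (subst set_integral_const) auto
  have near: "c - \<epsilon> \<le> ?f t \<and> ?f t \<le> c + \<epsilon>" if "t \<in> {a<..b}" for t
    using close[of t] that by (auto simp: abs_le_iff)
  have "(LINT t:{a<..b}|lborel. ?f t) \<le> (LINT t:{a<..b}|lborel. c + \<epsilon>)"
    using near by (intro set_integral_mono[OF f_int const_int]) blast
  moreover have "(LINT t:{a<..b}|lborel. c - \<epsilon>) \<le> (LINT t:{a<..b}|lborel. ?f t)"
    using near by (intro set_integral_mono[OF const_int f_int]) blast
  ultimately show ?thesis
    using markov_kernel_strip_integral[OF assms(1) _ assms(3-6)] assms(2)
    unfolding continuous_markov_kernel_of_def const by (auto simp: abs_le_iff algebra_simps)
qed

lemma continuous_markov_kernel_uniformly_continuous: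
  assumes "continuous_markov_kernel_of A K" "\<epsilon> > 0"
  obtains \<delta> where "\<delta> > 0"
    "\<And>t w t' w'. t \<in> {0..1} \<Longrightarrow> w \<in> {0..1} \<Longrightarrow> t' \<in> {0..1} \<Longrightarrow> w' \<in> {0..1} \<Longrightarrow>
       \<bar>t - t'\<bar> < \<delta> \<Longrightarrow> \<bar>w - w'\<bar> < \<delta> \<Longrightarrow> \<bar>measure (K t) {0..w} - measure (K t') {0..w'}\<bar> < \<epsilon>"
proof -
  have "uniformly_continuous_on ({0..1} \<times> {0..1}) (\<lambda>(x, y). measure (K x) {0..y})"
    using assms(1) unfolding continuous_markov_kernel_of_def
    by (intro compact_uniformly_continuous compact_Times compact_Icc) auto
  then obtain d where "d > 0" and d: "\<And>p p'. p \<in> {0..1} \<times> {0..1} \<Longrightarrow> p' \<in> {0..1} \<times> {0..1} \<Longrightarrow>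
       dist p' p < d \<Longrightarrow> dist ((\<lambda>(x, y). measure (K x) {0..y}) p') ((\<lambda>(x, y). measure (K x) {0..y}) p) < \<epsilon>"
    unfolding uniformly_continuous_on_def using assms(2) by metis
  show ?thesis
  proof (rule that[of "d / 2"])
    fix t w t' w' :: real
    assume "t \<in> {0..1}" "w \<in> {0..1}" "t' \<in> {0..1}" "w' \<in> {0..1}" "\<bar>t - t'\<bar> < d / 2" "\<bar>w - w'\<bar> < d / 2"
    moreover have "dist (t, w) (t', w') \<le> dist t t' + dist w w'"
      unfolding dist_Pair_Pair by (rule sqrt_sum_squares_le_sum_abs[THEN order_trans]) simp
    ultimately show "\<bar>measure (K t) {0..w} - measure (K t') {0..w'}\<bar> < \<epsilon>"
      using d[of "(t', w')" "(t, w)"] by (auto simp: dist_real_def)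
  qed (use \<open>d > 0\<close> in simp)
qed

lemma continuous_marginal_of_copula:
  fixes F G :: "real \<Rightarrow> real"
  assumes A: "is_copula A" and cont: "continuous_on UNIV (\<lambda>(x, y). A (F x) (G y))"
    and G_top: "(G \<longlongrightarrow> 1) at_top" and F: "\<And>a. F a \<in> {0..1}" and G: "\<And>b. G b \<in> {0..1}"
  shows "continuous_on UNIV F"
proof (rule uniform_limit_theorem)
  have "continuous_on UNIV ((\<lambda>(x, y). A (F x) (G y)) \<circ> (\<lambda>x. (x, c)))" for c
    by (intro continuous_on_compose continuous_on_subset[OF cont] continuous_intros) auto
  then show "\<forall>\<^sub>F k in sequentially. continuous_on UNIV (\<lambda>x. A (F x) (G (real k)))"
    by (simp add: o_def)
  show "uniform_limit UNIV (\<lambda>k x. A (F x) (G (real k))) F sequentially"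
  proof (rule uniform_limitI)
    fix e :: real
    assume "e > 0"
    have "((\<lambda>k. G (real k)) \<longlongrightarrow> 1) sequentially"
      by (rule filterlim_compose[OF G_top filterlim_real_sequentially])
    with \<open>e > 0\<close> have "\<forall>\<^sub>F k in sequentially. \<bar>G (real k) - 1\<bar> < e"
      by (simp add: tendsto_iff dist_real_def)
    then show "\<forall>\<^sub>F k in sequentially. \<forall>x\<in>UNIV. dist (A (F x) (G (real k))) (F x) < e"
    proof (rule eventually_mono)
      fix k
      assume "\<bar>G (real k) - 1\<bar> < e"
      moreover have "\<bar>A (F x) (G (real k)) - A (F x) 1\<bar> \<le> \<bar>F x - F x\<bar> + \<bar>G (real k) - 1\<bar>" for x
        using F G by (intro copula_lipschitz[OF A]) auto
      then have "\<bar>A (F x) (G (real k)) - F x\<bar> \<le> \<bar>G (real k) - 1\<bar>" for x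
        using is_copula_boundary(3)[OF A F] by simp
      ultimately show "\<forall>x\<in>UNIV. dist (A (F x) (G (real k))) (F x) < e"
        unfolding dist_real_def by (meson UNIV_I order_le_less_trans)
    qed
  qed
qed simp

section \<open>The checkerboard kernel\<close>

lemma convex_combination_close:
  fixes f w :: "'a \<Rightarrow> real"
  assumes "finite I" "\<And>j. j \<in> I \<Longrightarrow> 0 \<le> w j" "sum w I = 1"
    and "\<And>j. j \<in> I \<Longrightarrow> w j \<noteq> 0 \<Longrightarrow> \<bar>f j - c\<bar> \<le> \<delta>"
  shows "\<bar>(\<Sum>j\<in>I. f j * w j) - c\<bar> \<le> \<delta>"
proof -
  have "(\<Sum>j\<in>I. f j * w j) - c = (\<Sum>j\<in>I. (f j - c) * w j)"
    using assms(3) by (simp add: left_diff_distrib sum_subtractf sum_distrib_left[symmetric])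
  also have "\<bar>\<dots>\<bar> \<le> (\<Sum>j\<in>I. \<bar>(f j - c) * w j\<bar>)"
    by (rule sum_abs)
  also have "\<dots> = (\<Sum>j\<in>I. \<bar>f j - c\<bar> * w j)"
    using assms(2) by (intro sum.cong) (auto simp: abs_mult)
  also have "\<dots> \<le> (\<Sum>j\<in>I. \<delta> * w j)"
  proof (rule sum_mono)
    fix j
    assume "j \<in> I"
    then show "\<bar>f j - c\<bar> * w j \<le> \<delta> * w j"
      using assms(2,4) by (cases "w j = 0") (auto intro: mult_right_mono)
  qed
  also have "\<dots> = \<delta>"
    using assms(3) by (simp add: sum_distrib_left[symmetric])
  finally show ?thesis .
qed

definition clamp01 :: "real \<Rightarrow> real" where
  "clamp01 t = min 1 (max 0 t)"

lemma clamp01_increment_nonneg: "0 \<le> clamp01 (t + 1) - clamp01 t"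
  unfolding clamp01_def by linarith

lemma clamp01_increment_support: "clamp01 (t + 1) - clamp01 t \<noteq> 0 \<Longrightarrow> \<bar>t\<bar> < 1"
  unfolding clamp01_def by (auto simp: min_def max_def split: if_splits)

lemma clamp01_increment_sum:
  assumes "0 \<le> t" "t \<le> real N"
  shows "(\<Sum>j\<le>N. clamp01 (t - real j + 1) - clamp01 (t - real j)) = 1"
proof -
  have "(\<Sum>j\<le>N. clamp01 (t - real j + 1) - clamp01 (t - real j))
      = (\<Sum>j\<le>N. clamp01 (t - real j + 1) - clamp01 (t - real (Suc j) + 1))"
    by simp
  also have "\<dots> = clamp01 (t + 1) - clamp01 (t - real N)"
    by (subst sum_telescope) simp
  finally show ?thesis
    using assms unfolding clamp01_def by simp
qed

lemma cb_int_bounds: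
  assumes "u \<in> cb_int N i"
  shows "(real i - 1) / real N \<le> u" "u \<le> real i / real N"
  using assms by (auto simp: cb_int_def split: if_splits)

lemma cb_int_unique:
  assumes "u \<in> cb_int N i" "u \<in> cb_int N i'" "1 \<le> i" "1 \<le> i'"
  shows "i = i'"
proof -
  have False if "i < i'" "1 \<le> i" "u \<in> cb_int N i" "u \<in> cb_int N i'" for i i'
  proof -
    have "real i / real N \<le> (real i' - 1) / real N"
      using that(1) by (intro divide_right_mono) auto
    then show False
      using that cb_int_bounds(2)[OF that(3)] by (auto simp: cb_int_def split: if_splits)
  qed
  then show ?thesis
    using assms by (metis linorder_neqE_nat)
qed

lemma cb_int_cover:
  assumes "N \<ge> 1" "u \<in> {0..1}"
  obtains i where "i \<in> {1..N}" "u \<in> cb_int N i"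
proof (cases "real N * u \<le> 1")
  case True
  then have "u \<in> cb_int N 1"
    using assms by (auto simp: cb_int_def field_simps)
  then show ?thesis
    using assms(1) that by auto
next
  case False
  define i where "i = nat \<lceil>real N * u\<rceil>"
  have "real N * u \<le> real N"
    using assms by (simp add: mult_left_le)
  then have "real i - 1 < real N * u" "real N * u \<le> real i" "2 \<le> i" "i \<le> N"
    using False unfolding i_def by linarith+
  then have "u \<in> cb_int N i"
    using assms(1) by (auto simp: cb_int_def field_simps)
  then show ?thesis
    using \<open>2 \<le> i\<close> \<open>i \<le> N\<close> by (intro that[of i]) auto
qed

lemma cb_int_length:
  assumes "N \<ge> 1" "0 \<le> v" "j \<ge> 1"
  shows "real N * measure lborel ({0..v} \<inter> cb_int N j) = clamp01 (real N * v - real j + 1)"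
proof -
  have N: "real N > 0"
    using assms(1) by simp
  have Ioc: "measure lborel {l<..r} = max 0 (r - l)" for l r :: real
    by (cases "l \<le> r") auto
  show ?thesis
  proof (cases "j = 1")
    case True
    then have "{0..v} \<inter> cb_int N j = {0..min v (1 / real N)}"
      by (auto simp: cb_int_def)
    then show ?thesis
      using True assms N by (simp add: clamp01_def min_mult_distrib_left field_simps)
  next
    case False
    have "0 \<le> (real j - 1) / real N"
      using assms(3) by simp
    then have strip: "{0..v} \<inter> cb_int N j = {(real j - 1) / real N<..min v (real j / real N)}"
      using False by (auto simp: cb_int_def)
    have "real N * max 0 (min v (real j / real N) - (real j - 1) / real N)
        = max 0 (real N * min v (real j / real N) - real N * ((real j - 1) / real N))"
      using N by (simp add: max_mult_distrib_left right_diff_distrib)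
    also have "\<dots> = max 0 (min (real N * v) (real j) - real j + 1)"
      using N by (simp add: min_mult_distrib_left)
    finally show ?thesis
      unfolding clamp01_def strip Ioc by (auto simp: min_def max_def)
  qed
qed

text \<open>For \<open>x \<in> I\<^sub>i\<close>, \<open>cb_cond_df N B i j\<close> is \<open>K(x, [0, j/N])\<close> for the Markov kernel of \<open>CB\<^sub>N(B)\<close>.\<close>

definition cb_cond_df :: "nat \<Rightarrow> (real \<Rightarrow> real \<Rightarrow> real) \<Rightarrow> nat \<Rightarrow> nat \<Rightarrow> real" where
  "cb_cond_df N B i j =
     real N * (B (real i / real N) (real j / real N) - B ((real i - 1) / real N) (real j / real N))"

lemma cb_kernel_in_cell:
  assumes "i \<in> {1..N}" "u \<in> cb_int N i"
  shows "cb_kernel N B u v = (\<Sum>j\<in>{1..N}. (cb_cond_df N B i j - cb_cond_df N B i (j - 1))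
           * (real N * measure lborel ({0..v} \<inter> cb_int N j)))"
proof -
  have column: "indicator (cb_int N i') u = (if i' = i then 1 else (0::real))" if "i' \<in> {1..N}" for i'
  proof (cases "i' = i")
    case False
    then have "u \<notin> cb_int N i'"
      using cb_int_unique[OF assms(2), of i'] assms(1) that by auto
    then show ?thesis
      using False by simp
  qed (use assms(2) in simp)
  have "cb_kernel N B u v = real N ^ 2 * (\<Sum>i'\<in>{1..N}. if i' = i
      then (\<Sum>j\<in>{1..N}. cb_mass N B i j * measure lborel ({0..v} \<inter> cb_int N j)) else 0)"
    unfolding cb_kernel_def by (intro arg_cong2[where f="(*)"] refl sum.cong) (auto simp: column)
  also have "\<dots> = real N ^ 2 * (\<Sum>j\<in>{1..N}. cb_mass N B i j * measure lborel ({0..v} \<inter> cb_int N j))"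
    using assms(1) by simp
  also have "\<dots> = (\<Sum>j\<in>{1..N}. (real N * cb_mass N B i j) * (real N * measure lborel ({0..v} \<inter> cb_int N j)))"
    by (simp add: sum_distrib_left power2_eq_square mult_ac)
  also have "\<dots> = (\<Sum>j\<in>{1..N}. (cb_cond_df N B i j - cb_cond_df N B i (j - 1))
           * (real N * measure lborel ({0..v} \<inter> cb_int N j)))"
  proof (intro sum.cong refl arg_cong2[where f="(*)"])
    fix j
    assume "j \<in> {1..N}"
    then show "real N * cb_mass N B i j = cb_cond_df N B i j - cb_cond_df N B i (j - 1)"
      by (simp add: cb_mass_def cb_cond_df_def of_nat_diff algebra_simps)
  qed
  finally show ?thesis .
qed

lemma sum_by_parts_atMost:
  fixes g \<psi> :: "nat \<Rightarrow> real"
  assumes "g 0 = 0"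
  shows "(\<Sum>j\<in>{1..M}. (g j - g (j - 1)) * \<psi> j) = (\<Sum>j\<le>M. g j * (\<psi> j - \<psi> (Suc j))) + g M * \<psi> (Suc M)"
  by (induction M) (simp_all add: assms algebra_simps)

lemma cb_kernel_convex_combination:
  assumes "N \<ge> 1" "i \<in> {1..N}" "u \<in> cb_int N i" "v \<in> {0..1}" "\<And>x. B x 0 = 0"
  shows "cb_kernel N B u v = (\<Sum>j\<le>N. cb_cond_df N B i j
           * (clamp01 (real N * v - real j + 1) - clamp01 (real N * v - real j)))"
proof -
  define \<psi> where "\<psi> j = clamp01 (real N * v - real j + 1)" for j
  have "cb_kernel N B u v = (\<Sum>j\<in>{1..N}. (cb_cond_df N B i j - cb_cond_df N B i (j - 1)) * \<psi> j)"
    unfolding cb_kernel_in_cell[OF assms(2,3)] \<psi>_def using assms(1,4) by (simp add: cb_int_length)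
  also have "\<dots> = (\<Sum>j\<le>N. cb_cond_df N B i j * (\<psi> j - \<psi> (Suc j))) + cb_cond_df N B i N * \<psi> (Suc N)"
    by (rule sum_by_parts_atMost) (simp add: cb_cond_df_def assms(5))
  also have "\<psi> (Suc N) = 0"
    using assms(4) unfolding \<psi>_def clamp01_def by (simp add: mult_left_le)
  finally show ?thesis
    by (simp add: \<psi>_def algebra_simps)
qed

lemma cb_kernel_approx:
  assumes "N \<ge> 1" "u \<in> {0..1}" "v \<in> {0..1}" "\<And>x. B x 0 = 0"
    and close: "\<And>i j. i \<in> {1..N} \<Longrightarrow> u \<in> cb_int N i \<Longrightarrow> j \<le> N \<Longrightarrow>
       \<bar>real j / real N - v\<bar> \<le> 1 / real N \<Longrightarrow> \<bar>cb_cond_df N B i j - c\<bar> \<le> \<delta>"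
  shows "\<bar>cb_kernel N B u v - c\<bar> \<le> \<delta>"
proof -
  obtain i where i: "i \<in> {1..N}" "u \<in> cb_int N i"
    using cb_int_cover[OF assms(1,2)] .
  have Nv: "0 \<le> real N * v" "real N * v \<le> real N"
    using assms(3) by (auto simp: mult_left_le)
  have "\<bar>real j / real N - v\<bar> \<le> 1 / real N"
    if "clamp01 (real N * v - real j + 1) - clamp01 (real N * v - real j) \<noteq> 0" for j
  proof -
    have "\<bar>real j - real N * v\<bar> \<le> 1"
      using clamp01_increment_support[of "real N * v - real j"] that by simp
    then show ?thesis
      using assms(1) by (simp add: field_simps abs_le_iff)
  qed
  then show ?thesis
    unfolding cb_kernel_convex_combination[where B=B, OF assms(1) i assms(3,4)]
  proof (intro convex_combination_close)
    show "(\<Sum>j\<le>N. clamp01 (real N * v - real j + 1) - clamp01 (real N * v - real j)) = 1"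
      using clamp01_increment_sum[OF Nv] .
    show "0 \<le> clamp01 (real N * v - real j + 1) - clamp01 (real N * v - real j)" for j
      using clamp01_increment_nonneg[of "real N * v - real j"] by simp
  qed (use close[OF i] in auto)
qed

section \<open>The empirical copula\<close>

definition sample_rank :: "(nat \<Rightarrow> real) \<Rightarrow> nat \<Rightarrow> nat \<Rightarrow> nat" where
  "sample_rank x n k = card {l. l < n \<and> x l \<le> x k}"

lemma sample_rank_pos:
  assumes "k < n"
  shows "1 \<le> sample_rank x n k"
proof -
  have "k \<in> {l. l < n \<and> x l \<le> x k}"
    using assms by simp
  then have "card {l. l < n \<and> x l \<le> x k} > 0"
    by (subst card_gt_0_iff) auto
  then show ?thesis
    unfolding sample_rank_def by simp
qed

lemma sample_rank_le: "sample_rank x n k \<le> n"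
  unfolding sample_rank_def by (rule order.trans[OF card_mono[of "{..<n}"]]) auto

lemma sample_rank_le_iff:
  assumes "l < n"
  shows "sample_rank x n l \<le> sample_rank x n k \<longleftrightarrow> x l \<le> x k"
proof
  assume "sample_rank x n l \<le> sample_rank x n k"
  show "x l \<le> x k"
  proof (rule ccontr)
    assume "\<not> x l \<le> x k"
    then have "{l'. l' < n \<and> x l' \<le> x k} \<subset> {l'. l' < n \<and> x l' \<le> x l}"
      using assms by auto
    then have "sample_rank x n k < sample_rank x n l"
      unfolding sample_rank_def by (intro psubset_card_mono) auto
    with \<open>sample_rank x n l \<le> sample_rank x n k\<close> show False
      by simp
  qed
qed (auto simp: sample_rank_def intro: card_mono)

lemma sample_rank_image:
  assumes "inj_on x {..<n}"
  shows "sample_rank x n ` {..<n} = {1..n}"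
proof -
  have "inj_on (sample_rank x n) {..<n}"
  proof (rule inj_onI)
    fix k l
    assume "k \<in> {..<n}" "l \<in> {..<n}" "sample_rank x n k = sample_rank x n l"
    then have "x k = x l"
      using sample_rank_le_iff[of k n x l] sample_rank_le_iff[of l n x k] by auto
    with \<open>k \<in> {..<n}\<close> \<open>l \<in> {..<n}\<close> show "k = l"
      using assms by (auto dest: inj_onD)
  qed
  moreover have "sample_rank x n ` {..<n} \<subseteq> {1..n}"
    using sample_rank_pos sample_rank_le by auto
  ultimately show ?thesis
    by (intro card_subset_eq) (auto simp: card_image)
qed

definition emp_joint_df :: "(nat \<Rightarrow> real) \<Rightarrow> (nat \<Rightarrow> real) \<Rightarrow> nat \<Rightarrow> real \<Rightarrow> real \<Rightarrow> real" where
  "emp_joint_df x y n a b = card {k. k < n \<and> x k \<le> a \<and> y k \<le> b} / real n"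

lemma emp_df_bounds: "emp_df x n a \<in> {0..1}"
proof -
  have "card {k. k < n \<and> x k \<le> a} \<le> n"
    by (rule order.trans[OF card_mono[of "{..<n}"]]) auto
  then show ?thesis
    unfolding emp_df_def by (cases "n = 0") (auto simp: divide_le_eq_1)
qed

lemma emp_df_at_sample: "emp_df x n (x k) = real (sample_rank x n k) / real n"
  unfolding emp_df_def sample_rank_def ..

lemma emp_subcopula_zero: "emp_subcopula x y n 0 j = 0" "emp_subcopula x y n i 0 = 0"
  using sample_rank_pos[of _ n x] sample_rank_pos[of _ n y]
  unfolding emp_subcopula_def sample_rank_def by (fastforce intro!: arg_cong[where f = card])+

lemma emp_subcopula_at_ranks:
  assumes "k < n" "k' < n"
  shows "emp_subcopula x y n (sample_rank x n k) (sample_rank y n k') = emp_joint_df x y n (x k) (y k')"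
proof -
  have "{l. l < n \<and> sample_rank x n l \<le> sample_rank x n k \<and> sample_rank y n l \<le> sample_rank y n k'}
      = {l. l < n \<and> x l \<le> x k \<and> y l \<le> y k'}"
    using sample_rank_le_iff by blast
  then show ?thesis
    unfolding emp_subcopula_def emp_joint_df_def sample_rank_def by simp
qed

lemma emp_subcopula_approx:
  assumes A: "is_copula A" and "inj_on x {..<n}" "inj_on y {..<n}" "i \<le> n" "j \<le> n"
    and F: "\<And>a. F a \<in> {0..1}" and G: "\<And>b. G b \<in> {0..1}"
    and joint: "\<And>a b. \<bar>emp_joint_df x y n a b - A (F a) (G b)\<bar> \<le> \<delta>"
    and marg_x: "\<And>a. \<bar>emp_df x n a - F a\<bar> \<le> \<delta>" and marg_y: "\<And>b. \<bar>emp_df y n b - G b\<bar> \<le> \<delta>"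
  shows "\<bar>emp_subcopula x y n i j - A (real i / real n) (real j / real n)\<bar> \<le> 3 * \<delta>"
proof (cases "i = 0 \<or> j = 0")
  case True
  have "real i / real n \<in> {0..1}" "real j / real n \<in> {0..1}"
    using assms(4,5) by (auto simp: divide_le_eq_1)
  then show ?thesis
    using True emp_subcopula_zero is_copula_boundary[OF A] marg_x[of 0] by auto
next
  case False
  then obtain k k' where k: "k < n" "sample_rank x n k = i" and k': "k' < n" "sample_rank y n k' = j"
    using sample_rank_image[OF assms(2)] sample_rank_image[OF assms(3)] assms(4,5)
    by (metis atLeastAtMost_iff imageE lessThan_iff less_one not_le)
  have "\<bar>A (F (x k)) (G (y k')) - A (emp_df x n (x k)) (emp_df y n (y k'))\<bar>
      \<le> \<bar>F (x k) - emp_df x n (x k)\<bar> + \<bar>G (y k') - emp_df y n (y k')\<bar>"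
    using emp_df_bounds by (intro copula_lipschitz[OF A F _ G]) auto
  moreover have "emp_subcopula x y n i j = emp_joint_df x y n (x k) (y k')"
    using emp_subcopula_at_ranks[OF k(1) k'(1), of x y] k(2) k'(2) by simp
  moreover have "real i / real n = emp_df x n (x k)" "real j / real n = emp_df y n (y k')"
    using k(2) k'(2) by (simp_all add: emp_df_at_sample)
  ultimately show ?thesis
    using joint[of "x k" "y k'"] marg_x[of "x k"] marg_y[of "y k'"] by (simp add: abs_minus_commute)
qed

lemma bilinear_ext_index:
  assumes "n \<ge> 1" "u \<in> {0..1}"
  defines "a \<equiv> min (n - 1) (nat \<lfloor>real n * u\<rfloor>)"
  shows "real n * u - real a \<in> {0..1}" "a + 1 \<le> n"
    "\<bar>real a / real n - u\<bar> \<le> 1 / real n" "\<bar>real (a + 1) / real n - u\<bar> \<le> 1 / real n"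
proof -
  have n: "real n > 0"
    using assms(1) by simp
  have nu: "0 \<le> real n * u" "real n * u \<le> real n"
    using assms(2) by (auto simp: mult_left_le)
  then have floor: "real (nat \<lfloor>real n * u\<rfloor>) \<le> real n * u" "real n * u < real (nat \<lfloor>real n * u\<rfloor>) + 1"
    by linarith+
  show offset: "real n * u - real a \<in> {0..1}"
  proof (cases "n - 1 \<le> nat \<lfloor>real n * u\<rfloor>")
    case True
    then have "a = n - 1"
      unfolding a_def by simp
    moreover have "real (n - 1) \<le> real (nat \<lfloor>real n * u\<rfloor>)"
      using True by (simp only: of_nat_le_iff)
    moreover have "real (n - 1) = real n - 1"
      using assms(1) by simp
    ultimately show ?thesis
      using floor nu by simp linarith
  next
    case False
    then have "a = nat \<lfloor>real n * u\<rfloor>"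
      unfolding a_def by simp
    then show ?thesis
      using floor by (simp only: atLeastAtMost_iff) linarith
  qed
  show "a + 1 \<le> n"
    unfolding a_def using assms(1) by simp
  have "real a / real n - u = - ((real n * u - real a) / real n)"
       "real (a + 1) / real n - u = (1 - (real n * u - real a)) / real n"
    using n by (simp_all add: field_simps)
  then show "\<bar>real a / real n - u\<bar> \<le> 1 / real n" "\<bar>real (a + 1) / real n - u\<bar> \<le> 1 / real n"
    using offset n by (auto simp: divide_right_mono)
qed

lemma bilinear_ext_approx:
  assumes A: "is_copula A" and "n \<ge> 1" "u \<in> {0..1}" "v \<in> {0..1}"
    and grid: "\<And>i j. i \<le> n \<Longrightarrow> j \<le> n \<Longrightarrow> \<bar>C i j - A (real i / real n) (real j / real n)\<bar> \<le> e"
  shows "\<bar>bilinear_ext n C u v - A u v\<bar> \<le> e + 2 / real n"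
proof -
  define a where "a = min (n - 1) (nat \<lfloor>real n * u\<rfloor>)"
  define b where "b = min (n - 1) (nat \<lfloor>real n * v\<rfloor>)"
  define t where "t = real n * u - real a"
  define s where "s = real n * v - real b"
  note ia = bilinear_ext_index[OF assms(2,3), folded a_def, folded t_def]
  note ib = bilinear_ext_index[OF assms(2,4), folded b_def, folded s_def]
  have corner: "\<bar>C p q - A u v\<bar> \<le> e + 2 / real n"
    if "p \<le> n" "q \<le> n" "\<bar>real p / real n - u\<bar> \<le> 1 / real n" "\<bar>real q / real n - v\<bar> \<le> 1 / real n" for p q
  proof -
    have "\<bar>A (real p / real n) (real q / real n) - A u v\<bar> \<le> \<bar>real p / real n - u\<bar> + \<bar>real q / real n - v\<bar>"
      using that assms(3,4) by (intro copula_lipschitz[OF A]) (auto simp: divide_le_eq_1)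
    then show ?thesis
      using grid[OF that(1,2)] that(3,4) by (simp add: add_divide_distrib[symmetric])
  qed
  define w where "w pq = (if fst pq = 0 then 1 - t else t) * (if snd pq = 0 then 1 - s else s)" for pq :: "nat \<times> nat"
  define I where "I = {(0, 0), (1, 0), (0, 1), (1, 1) :: nat \<times> nat}"
  have "bilinear_ext n C u v = (\<Sum>pq\<in>I. C (a + fst pq) (b + snd pq) * w pq)"
    unfolding bilinear_ext_def Let_def I_def w_def a_def[symmetric] b_def[symmetric] t_def[symmetric] s_def[symmetric]
    by (simp add: algebra_simps)
  also have "\<bar>\<dots> - A u v\<bar> \<le> e + 2 / real n"
  proof (rule convex_combination_close)
    show "sum w I = 1"
      unfolding I_def w_def by (simp add: algebra_simps)
  qed (use ia ib corner in \<open>auto simp: I_def w_def\<close>)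
  finally show ?thesis .
qed

lemma emp_copula_approx:
  assumes A: "is_copula A" and "inj_on x {..<n}" "inj_on y {..<n}" "n \<ge> 1" "u \<in> {0..1}" "v \<in> {0..1}"
    and "\<And>a. F a \<in> {0..1}" "\<And>b. G b \<in> {0..1}"
    and "\<And>a b. \<bar>emp_joint_df x y n a b - A (F a) (G b)\<bar> \<le> \<delta>"
    and "\<And>a. \<bar>emp_df x n a - F a\<bar> \<le> \<delta>" "\<And>b. \<bar>emp_df y n b - G b\<bar> \<le> \<delta>"
  shows "\<bar>emp_copula x y n u v - A u v\<bar> \<le> 3 * \<delta> + 2 / real n"
  unfolding emp_copula_def
  by (intro bilinear_ext_approx[OF A assms(4-6)] emp_subcopula_approx[OF A assms(2,3) _ _ assms(7-11)])

lemma emp_copula_grounded: "emp_copula x y n u 0 = 0"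
  unfolding emp_copula_def bilinear_ext_def Let_def by (simp add: emp_subcopula_zero)

section \<open>Deterministic convergence\<close>

lemma cb_cond_df_copula_close:
  assumes A: "is_copula A" and K: "continuous_markov_kernel_of A K" and "i \<in> {1..N}" "j \<le> N"
    and close: "\<And>t. t \<in> {(real i - 1) / real N..real i / real N} \<Longrightarrow>
       \<bar>measure (K t) {0..real j / real N} - c\<bar> \<le> \<epsilon>"
  shows "\<bar>cb_cond_df N A i j - c\<bar> \<le> \<epsilon>"
proof -
  have N: "real N > 0"
    using assms(3) by simp
  have width: "real i / real N - (real i - 1) / real N = 1 / real N"
    using N by (simp add: field_simps)
  have "\<bar>(A (real i / real N) (real j / real N) - A ((real i - 1) / real N) (real j / real N))
      - 1 / real N * c\<bar> \<le> 1 / real N * \<epsilon>"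
    using continuous_markov_kernel_average[OF A K _ _ _ _ close, of "(real i - 1) / real N" "real i / real N"]
      assms(3,4) N unfolding width by (auto simp: divide_le_eq_1 divide_right_mono)
  moreover have "cb_cond_df N A i j - c = real N *
      ((A (real i / real N) (real j / real N) - A ((real i - 1) / real N) (real j / real N)) - 1 / real N * c)"
    unfolding cb_cond_df_def using N by (simp add: field_simps)
  ultimately have "\<bar>cb_cond_df N A i j - c\<bar> \<le> real N * (1 / real N * \<epsilon>)"
    by (metis abs_mult abs_of_nat mult_left_mono of_nat_0_le_iff)
  then show ?thesis
    using N by simp
qed

lemma cb_cond_df_perturb:
  assumes "i \<in> {1..N}" "j \<le> N"
    and close: "\<And>p q. p \<in> {0..1} \<Longrightarrow> q \<in> {0..1} \<Longrightarrow> \<bar>B p q - A p q\<bar> \<le> e"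
  shows "\<bar>cb_cond_df N B i j - cb_cond_df N A i j\<bar> \<le> 2 * real N * e"
proof -
  have grid: "real i / real N \<in> {0..1}" "(real i - 1) / real N \<in> {0..1}" "real j / real N \<in> {0..1}"
    using assms(1,2) by (auto simp: divide_le_eq_1)
  have "cb_cond_df N B i j - cb_cond_df N A i j
      = real N * (B (real i / real N) (real j / real N) - A (real i / real N) (real j / real N))
        - real N * (B ((real i - 1) / real N) (real j / real N) - A ((real i - 1) / real N) (real j / real N))"
    unfolding cb_cond_df_def by (simp add: algebra_simps)
  then have "\<bar>cb_cond_df N B i j - cb_cond_df N A i j\<bar>
      \<le> real N * \<bar>B (real i / real N) (real j / real N) - A (real i / real N) (real j / real N)\<bar>
        + real N * \<bar>B ((real i - 1) / real N) (real j / real N) - A ((real i - 1) / real N) (real j / real N)\<bar>"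
    by (metis abs_mult abs_of_nat abs_triangle_ineq4)
  also have "\<dots> \<le> real N * e + real N * e"
    using close grid by (intro add_mono mult_left_mono) auto
  finally show ?thesis
    by (simp add: algebra_simps)
qed

lemma cb_emp_kernel_error:
  assumes A: "is_copula A" and K: "continuous_markov_kernel_of A K"
    and inj: "inj_on x {..<n}" "inj_on y {..<n}" and "n \<ge> 1" "N \<ge> 1"
    and F: "\<And>a. F a \<in> {0..1}" and G: "\<And>b. G b \<in> {0..1}"
    and joint: "\<And>a b. \<bar>emp_joint_df x y n a b - A (F a) (G b)\<bar> \<le> \<delta>"
    and marg_x: "\<And>a. \<bar>emp_df x n a - F a\<bar> \<le> \<delta>" and marg_y: "\<And>b. \<bar>emp_df y n b - G b\<bar> \<le> \<delta>"
    and cont: "\<And>t w t' w'. t \<in> {0..1} \<Longrightarrow> w \<in> {0..1} \<Longrightarrow> t' \<in> {0..1} \<Longrightarrow> w' \<in> {0..1} \<Longrightarrow>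
       \<bar>t - t'\<bar> < \<eta> \<Longrightarrow> \<bar>w - w'\<bar> < \<eta> \<Longrightarrow> \<bar>measure (K t) {0..w} - measure (K t') {0..w'}\<bar> < \<epsilon>"
    and fine: "1 / real N + \<delta> < \<eta>"
  shows "\<bar>cb_kernel N (emp_copula x y n) (emp_df x n a) (emp_df y n b) - measure (K (F a)) {0..G b}\<bar>
     \<le> 2 * real N * (3 * \<delta> + 2 / real n) + \<epsilon>"
proof (rule cb_kernel_approx[where B = "emp_copula x y n", OF assms(6) emp_df_bounds emp_df_bounds emp_copula_grounded])
  fix i j
  assume i: "i \<in> {1..N}" "emp_df x n a \<in> cb_int N i"
    and j: "j \<le> N" "\<bar>real j / real N - emp_df y n b\<bar> \<le> 1 / real N"
  have N: "real N > 0"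
    using assms(6) by simp
  have "\<bar>cb_cond_df N A i j - measure (K (F a)) {0..G b}\<bar> \<le> \<epsilon>"
  proof (rule cb_cond_df_copula_close[OF A K i(1) j(1)])
    fix t
    assume t: "t \<in> {(real i - 1) / real N..real i / real N}"
    moreover have "real i / real N - (real i - 1) / real N = 1 / real N"
      using N by (simp add: field_simps)
    ultimately have "\<bar>t - emp_df x n a\<bar> \<le> 1 / real N"
      using cb_int_bounds[OF i(2)] unfolding abs_le_iff atLeastAtMost_iff by linarith
    then have "\<bar>t - F a\<bar> < \<eta>" "\<bar>real j / real N - G b\<bar> < \<eta>"
      using marg_x[of a] marg_y[of b] j(2) fine by linarith+
    moreover have "0 \<le> (real i - 1) / real N" "real i / real N \<le> 1" "real j / real N \<in> {0..1}"
      using i(1) j(1) by (auto simp: divide_le_eq_1)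
    then have "t \<in> {0..1}" "real j / real N \<in> {0..1}"
      using t by auto
    ultimately show "\<bar>measure (K t) {0..real j / real N} - measure (K (F a)) {0..G b}\<bar> \<le> \<epsilon>"
      using cont F G by (meson less_imp_le)
  qed
  moreover have "\<bar>cb_cond_df N (emp_copula x y n) i j - cb_cond_df N A i j\<bar> \<le> 2 * real N * (3 * \<delta> + 2 / real n)"
    using emp_copula_approx[OF A inj assms(5) _ _ F G joint marg_x marg_y] i(1) j(1)
    by (intro cb_cond_df_perturb) auto
  ultimately show "\<bar>cb_cond_df N (emp_copula x y n) i j - measure (K (F a)) {0..G b}\<bar>
      \<le> 2 * real N * (3 * \<delta> + 2 / real n) + \<epsilon>"
    by linarith
qed

lemma cb_emp_kernel_error_scaled:
  assumes A: "is_copula A" and K: "continuous_markov_kernel_of A K"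
    and inj: "inj_on x {..<n}" "inj_on y {..<n}" and "n \<ge> 1"
    and F: "\<And>a. F a \<in> {0..1}" and G: "\<And>b. G b \<in> {0..1}"
    and joint: "\<And>a b. real N * \<bar>emp_joint_df x y n a b - A (F a) (G b)\<bar> \<le> \<epsilon>'"
    and marg_x: "\<And>a. real N * \<bar>emp_df x n a - F a\<bar> \<le> \<epsilon>'"
    and marg_y: "\<And>b. real N * \<bar>emp_df y n b - G b\<bar> \<le> \<epsilon>'"
    and cont: "\<And>t w t' w'. t \<in> {0..1} \<Longrightarrow> w \<in> {0..1} \<Longrightarrow> t' \<in> {0..1} \<Longrightarrow> w' \<in> {0..1} \<Longrightarrow>
       \<bar>t - t'\<bar> < \<eta> \<Longrightarrow> \<bar>w - w'\<bar> < \<eta> \<Longrightarrow> \<bar>measure (K t) {0..w} - measure (K t') {0..w'}\<bar> < \<epsilon>"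
    and "\<eta> > 0" "\<epsilon>' > 0" and N_large: "(1 + \<epsilon>') / \<eta> < real N"
  shows "\<bar>cb_kernel N (emp_copula x y n) (emp_df x n a) (emp_df y n b) - measure (K (F a)) {0..G b}\<bar>
     \<le> 6 * \<epsilon>' + 4 * (real N / real n) + \<epsilon>"
proof -
  have N: "real N > 0"
    using N_large \<open>\<eta> > 0\<close> \<open>\<epsilon>' > 0\<close> by (smt (verit) divide_pos_pos)
  have scaled: "\<bar>z\<bar> \<le> \<epsilon>' / real N" if "real N * \<bar>z\<bar> \<le> \<epsilon>'" for z
    using that N by (simp add: field_simps)
  have "1 + \<epsilon>' < \<eta> * real N"
    using N_large \<open>\<eta> > 0\<close> by (simp add: field_simps)
  then have "1 / real N + \<epsilon>' / real N < \<eta>"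
    using N by (simp add: field_simps)
  then have "\<bar>cb_kernel N (emp_copula x y n) (emp_df x n a) (emp_df y n b) - measure (K (F a)) {0..G b}\<bar>
      \<le> 2 * real N * (3 * (\<epsilon>' / real N) + 2 / real n) + \<epsilon>"
    using N joint marg_x marg_y
    by (intro cb_emp_kernel_error[OF A K inj \<open>n \<ge> 1\<close> _ F G _ _ _ cont]) (auto intro: scaled)
  also have "\<dots> = 6 * \<epsilon>' + 4 * (real N / real n) + \<epsilon>"
    using N by (simp add: field_simps)
  finally show ?thesis .
qed

lemma SUP_tendsto_zeroI:
  fixes f :: "nat \<Rightarrow> 'b \<Rightarrow> real"
  assumes nonneg: "\<And>n p. 0 \<le> f n p"
    and small: "\<And>\<epsilon>. \<epsilon> > 0 \<Longrightarrow> eventually (\<lambda>n. \<forall>p. f n p \<le> \<epsilon>) sequentially"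
  shows "(\<lambda>n. SUP p. f n p) \<longlonglongrightarrow> 0"
proof (rule tendstoI)
  fix \<epsilon> :: real
  assume "\<epsilon> > 0"
  then have "eventually (\<lambda>n. \<forall>p. f n p \<le> \<epsilon> / 2) sequentially"
    by (intro small) simp
  then show "eventually (\<lambda>n. dist (SUP p. f n p) 0 < \<epsilon>) sequentially"
  proof eventually_elim
    case (elim n)
    have bdd: "bdd_above (range (f n))"
      using elim by (intro bdd_aboveI2[where M = "\<epsilon> / 2"]) blast
    have "(SUP p. f n p) \<le> \<epsilon> / 2"
      using elim by (intro cSUP_least) auto
    moreover have "0 \<le> (SUP p. f n p)"
      using nonneg[of n] cSUP_upper[OF UNIV_I bdd] order_trans by blast
    ultimately show ?case
      using \<open>\<epsilon> > 0\<close> by (simp add: dist_real_def)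
  qed
qed

lemma cb_emp_kernel_uniform_limit:
  assumes A: "is_copula A" and K: "continuous_markov_kernel_of A K" and inj: "inj x" "inj y"
    and F: "\<And>a. F a \<in> {0..1}" and G: "\<And>b. G b \<in> {0..1}"
    and N_top: "filterlim N at_top sequentially" and N_small: "(\<lambda>n. real (N n) / real n) \<longlonglongrightarrow> 0"
    and N_le: "\<And>n. real (N n) \<le> R n"
    and rate: "\<And>\<epsilon>. \<epsilon> > 0 \<Longrightarrow> eventually (\<lambda>n. \<forall>a b.
        R n * \<bar>emp_joint_df x y n a b - A (F a) (G b)\<bar> \<le> \<epsilon> \<and>
        R n * \<bar>emp_df x n a - F a\<bar> \<le> \<epsilon> \<and> R n * \<bar>emp_df y n b - G b\<bar> \<le> \<epsilon>) sequentially"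
  shows "(\<lambda>n. SUP p. \<bar>cb_kernel (N n) (emp_copula x y n) (emp_df x n (fst p)) (emp_df y n (snd p))
      - measure (K (F (fst p))) {0..G (snd p)}\<bar>) \<longlonglongrightarrow> 0"
proof (rule SUP_tendsto_zeroI)
  fix \<epsilon> :: real
  assume "\<epsilon> > 0"
  obtain \<eta> where "\<eta> > 0" and cont: "\<And>t w t' w'. t \<in> {0..1} \<Longrightarrow> w \<in> {0..1} \<Longrightarrow> t' \<in> {0..1} \<Longrightarrow>
      w' \<in> {0..1} \<Longrightarrow> \<bar>t - t'\<bar> < \<eta> \<Longrightarrow> \<bar>w - w'\<bar> < \<eta> \<Longrightarrow>
      \<bar>measure (K t) {0..w} - measure (K t') {0..w'}\<bar> < \<epsilon> / 4"
    by (rule continuous_markov_kernel_uniformly_continuous[OF K, of "\<epsilon> / 4"]) (use \<open>\<epsilon> > 0\<close> in auto)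
  define \<epsilon>' where "\<epsilon>' = \<epsilon> / 24"
  have "\<epsilon>' > 0"
    using \<open>\<epsilon> > 0\<close> unfolding \<epsilon>'_def by simp
  have "filterlim (\<lambda>n. real (N n)) at_top sequentially"
    by (rule filterlim_compose[OF filterlim_real_sequentially N_top])
  then have "eventually (\<lambda>n. (1 + \<epsilon>') / \<eta> < real (N n)) sequentially"
    by (simp add: filterlim_at_top_dense)
  moreover have "eventually (\<lambda>n. real (N n) / real n < \<epsilon> / 16) sequentially"
    using \<open>\<epsilon> > 0\<close> by (intro order_tendstoD(2)[OF N_small]) simp
  moreover note rate[OF \<open>\<epsilon>' > 0\<close>] eventually_ge_at_top[of 1]
  ultimately show "eventually (\<lambda>n. \<forall>p. \<bar>cb_kernel (N n) (emp_copula x y n) (emp_df x n (fst p))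
      (emp_df y n (snd p)) - measure (K (F (fst p))) {0..G (snd p)}\<bar> \<le> \<epsilon>) sequentially"
  proof eventually_elim
    case (elim n)
    have "real (N n) * \<bar>z\<bar> \<le> \<epsilon>'" if "R n * \<bar>z\<bar> \<le> \<epsilon>'" for z
      using mult_right_mono[OF N_le[of n] abs_ge_zero[of z]] that by linarith
    then have "\<bar>cb_kernel (N n) (emp_copula x y n) (emp_df x n a) (emp_df y n b)
        - measure (K (F a)) {0..G b}\<bar> \<le> 6 * \<epsilon>' + 4 * (real (N n) / real n) + \<epsilon> / 4" for a b
      using elim(3,4) inj \<open>\<eta> > 0\<close> \<open>\<epsilon>' > 0\<close>
      by (intro cb_emp_kernel_error_scaled[OF A K _ _ _ F G _ _ _ cont _ _ elim(1)]) (auto intro: inj_on_subset)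
    moreover have "6 * \<epsilon>' + 4 * (real (N n) / real n) + \<epsilon> / 4 \<le> \<epsilon>"
      using elim(2) \<open>\<epsilon> > 0\<close> unfolding \<epsilon>'_def by linarith
    ultimately show ?case
      by (meson order_trans)
  qed
qed simp

section \<open>Equiprobable quantile grids\<close>

lemma continuous_df_greatest_quantile:
  fixes F :: "real \<Rightarrow> real"
  assumes mono: "mono F" and cont: "continuous_on UNIV F"
    and bot: "(F \<longlongrightarrow> 0) at_bot" and top: "(F \<longlongrightarrow> 1) at_top" and "0 < c" "c < 1"
  obtains \<alpha> where "F \<alpha> = c" "\<And>t. F t \<le> c \<Longrightarrow> t \<le> \<alpha>"
proof -
  obtain p where p: "F p < c"
    using order_tendstoD(2)[OF bot \<open>0 < c\<close>] by (auto simp: eventually_at_bot_linorder)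
  obtain q where q: "F q > c"
    using order_tendstoD(1)[OF top \<open>c < 1\<close>] by (auto simp: eventually_at_top_linorder)
  have below_q: "t \<le> q" if "F t \<le> c" for t
    using monoD[OF mono, of q t] q that by (cases "t \<le> q") auto
  then have "p \<le> q"
    using p by simp
  then obtain t0 where t0: "F t0 = c"
    using IVT'[of F p c q] p q continuous_on_subset[OF cont subset_UNIV] by auto
  define S where "S = {t. F t \<le> c}"
  have "closed S"
    unfolding S_def by (rule closed_Collect_le[OF cont continuous_on_const])
  moreover have "bdd_above S"
    using below_q unfolding S_def by (intro bdd_aboveI[where M = q]) auto
  moreover have "t0 \<in> S"
    using t0 unfolding S_def by simp
  ultimately have "Sup S \<in> S" "t0 \<le> Sup S"
    by (auto intro: closed_contains_Sup cSup_upper)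
  then have "F (Sup S) = c"
    using monoD[OF mono, of t0 "Sup S"] t0 unfolding S_def by simp
  moreover have "t \<le> Sup S" if "F t \<le> c" for t
    using cSup_upper[OF _ \<open>bdd_above S\<close>] that unfolding S_def by auto
  ultimately show ?thesis
    using that by blast
qed

lemma mono_df_bounds:
  fixes F :: "real \<Rightarrow> real"
  assumes mono: "mono F" and bot: "(F \<longlongrightarrow> 0) at_bot" and top: "(F \<longlongrightarrow> 1) at_top"
  shows "F a \<in> {0..1}"
proof -
  have "eventually (\<lambda>x. F x \<le> F a) at_bot"
    unfolding eventually_at_bot_linorder by (intro exI[of _ a] allI impI monoD[OF mono])
  then have "0 \<le> F a"
    by (rule tendsto_upperbound[OF bot]) simp
  moreover have "eventually (\<lambda>x. F a \<le> F x) at_top"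
    unfolding eventually_at_top_linorder by (intro exI[of _ a] allI impI monoD[OF mono])
  then have "F a \<le> 1"
    by (rule tendsto_lowerbound[OF top]) simp
  ultimately show ?thesis
    by simp
qed

lemma level_bracket:
  assumes "m \<ge> 1" "t \<in> {0..1}"
  obtains r where "r < m" "r = 0 \<or> real r / real m < t" "t \<le> real (Suc r) / real m"
proof -
  have m: "real m > 0"
    using assms(1) by simp
  have "0 \<le> real m * t" "real m * t \<le> real m"
    using assms(2) by (auto simp: mult_left_le)
  then obtain c :: nat where c: "c \<le> m" "real c - 1 < real m * t" "real m * t \<le> real c"
    by (intro that[of "nat \<lceil>real m * t\<rceil>"]) linarith+
  show ?thesis
  proof (rule that[of "c - 1"])
    show "c - 1 < m"
      using c(1) assms(1) by linarith
    show "c - 1 = 0 \<or> real (c - 1) / real m < t"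
      using c(2) m by (cases "c \<le> 1") (auto simp: of_nat_diff field_simps)
    show "t \<le> real (Suc (c - 1)) / real m"
      using c(3) assms(2) m by (cases "c = 0") (auto simp: field_simps)
  qed
qed

text \<open>With consecutive levels one \<open>F\<close>-mass \<open>1/m\<close> apart, every quadrant is sandwiched between two
  grid rectangles whose masses differ by at most \<open>2/m\<close>.\<close>

definition quantile_grid :: "(real \<Rightarrow> real) \<Rightarrow> nat \<Rightarrow> (nat \<Rightarrow> real set) \<Rightarrow> bool" where
  "quantile_grid F m S \<longleftrightarrow> S 0 = {} \<and> S m = UNIV \<and>
    (\<forall>r\<in>{1..<m}. \<exists>\<alpha>. S r = {..\<alpha>} \<and> F \<alpha> = real r / real m) \<and>
    (\<forall>r<m. S r \<subseteq> S (Suc r)) \<and> (\<forall>a. \<exists>r<m. S r \<subseteq> {..a} \<and> {..a} \<subseteq> S (Suc r))"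

lemma quantile_grid_exists:
  fixes F :: "real \<Rightarrow> real"
  assumes mono: "mono F" and cont: "continuous_on UNIV F"
    and bot: "(F \<longlongrightarrow> 0) at_bot" and top: "(F \<longlongrightarrow> 1) at_top" and "m \<ge> 1"
  shows "\<exists>S. quantile_grid F m S"
proof -
  have m: "real m > 0"
    using \<open>m \<ge> 1\<close> by simp
  have "\<exists>\<alpha>. F \<alpha> = real r / real m \<and> (\<forall>t. F t \<le> real r / real m \<longrightarrow> t \<le> \<alpha>)" if "r \<in> {1..<m}" for r
    using continuous_df_greatest_quantile[OF mono cont bot top, of "real r / real m"] that m by auto
  then obtain \<alpha> where \<alpha>: "\<And>r. r \<in> {1..<m} \<Longrightarrow> F (\<alpha> r) = real r / real m"
    and \<alpha>_max: "\<And>r t. r \<in> {1..<m} \<Longrightarrow> F t \<le> real r / real m \<Longrightarrow> t \<le> \<alpha> r"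
    by metis
  define S where "S r = (if r = 0 then {} else if r \<ge> m then UNIV else {..\<alpha> r})" for r
  have "S r \<subseteq> S (Suc r)" if "r < m" for r
  proof (cases "r = 0 \<or> Suc r \<ge> m")
    case False
    then have "F (\<alpha> r) \<le> real (Suc r) / real m"
      using \<alpha>[of r] that m by (simp add: divide_right_mono)
    then show ?thesis
      using \<alpha>_max[of "Suc r" "\<alpha> r"] False unfolding S_def by auto
  qed (auto simp: S_def)
  moreover have "\<exists>r<m. S r \<subseteq> {..a} \<and> {..a} \<subseteq> S (Suc r)" for a
  proof -
    obtain r where r: "r < m" "r = 0 \<or> real r / real m < F a" "F a \<le> real (Suc r) / real m"
      using level_bracket[OF \<open>m \<ge> 1\<close> mono_df_bounds[OF mono bot top]] .
    have "\<alpha> r \<le> a" if "r \<in> {1..<m}"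
    proof (rule ccontr)
      assume "\<not> \<alpha> r \<le> a"
      then have "F a \<le> F (\<alpha> r)"
        using monoD[OF mono] by simp
      then show False
        using r(2) that \<alpha>[OF that] by auto
    qed
    then have "S r \<subseteq> {..a}"
      unfolding S_def using r(1) by auto
    moreover have "a \<le> \<alpha> (Suc r)" if "Suc r \<in> {1..<m}"
      using \<alpha>_max[OF that] r(3) by blast
    then have "{..a} \<subseteq> S (Suc r)"
      unfolding S_def by auto
    ultimately show ?thesis
      using r(1) by blast
  qed
  ultimately have "quantile_grid F m S"
    unfolding quantile_grid_def using \<alpha> \<open>m \<ge> 1\<close> by (auto simp: S_def)
  then show ?thesis
    by blast
qed

lemma quantile_grid_borel:
  assumes "quantile_grid F m S" "r \<le> m"
  shows "S r \<in> sets borel"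
proof (cases "r = 0 \<or> r = m")
  case False
  then have "r \<in> {1..<m}"
    using assms(2) by auto
  then obtain \<alpha> where "S r = {..\<alpha>}"
    using assms(1) unfolding quantile_grid_def by blast
  then show ?thesis
    by simp
qed (use assms in \<open>auto simp: quantile_grid_def\<close>)

lemma quantile_grid_cell:
  assumes "quantile_grid F m S"
  obtains r where "r < m" "t \<in> S (Suc r) - S r"
proof -
  have S: "S 0 = {}" "S m = UNIV"
    using assms unfolding quantile_grid_def by auto
  define j where "j = (LEAST j. t \<in> S j)"
  have "t \<in> S j" "j \<le> m"
    unfolding j_def using S by (auto intro: LeastI Least_le)
  moreover have "j \<noteq> 0"
  proof
    assume "j = 0"
    with \<open>t \<in> S j\<close> S show False
      by simp
  qed
  then obtain r where "j = Suc r"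
    using not0_implies_Suc by blast
  moreover have "t \<notin> S r"
    using not_less_Least[of r "\<lambda>j. t \<in> S j"] \<open>j = Suc r\<close> unfolding j_def by auto
  ultimately show ?thesis
    by (intro that[of r]) auto
qed

lemma quantile_grid_cover:
  assumes "quantile_grid \<Phi> m S" "m \<ge> 1"
  shows "\<exists>r<m. S r \<subseteq> {..a} \<and> {..a} \<subseteq> S (Suc r)" "\<exists>r<m. S r \<subseteq> UNIV \<and> UNIV \<subseteq> S (Suc r)"
  using assms unfolding quantile_grid_def by (auto intro!: exI[of _ "m - 1"])

lemma summable_grid_hoeffding_bound:
  fixes m :: "nat \<Rightarrow> nat"
  assumes "0 < s" "s < 1 / 2" "0 < e" and m: "\<And>n. real (m n) + 1 \<le> 4 * real n powr s / e + 3"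
  shows "summable (\<lambda>n. (real (m n) + 1)\<^sup>2 * (2 * exp (- 2 * real n * (e / (2 * real n powr s))\<^sup>2)))"
proof -
  define g where "g n = (4 * real n powr s / e + 3)\<^sup>2 * (2 * exp (- 2 * real n * (e / (2 * real n powr s))\<^sup>2))"
    for n :: nat
  have "(\<lambda>n. real n ^ 2 * g n) \<longlonglongrightarrow> 0"
    unfolding g_def using assms(1-3) by real_asymp
  then have "eventually (\<lambda>n. dist (real n ^ 2 * g n) 0 < 1) sequentially"
    by (rule tendstoD) simp
  then obtain n0 where n0: "\<And>n. n \<ge> n0 \<Longrightarrow> \<bar>real n ^ 2 * g n\<bar> < 1"
    by (auto simp: eventually_sequentially dist_real_def)
  have g_le: "norm (g n) \<le> inverse (real n ^ 2)" if "n \<ge> n0 + 1" for n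
  proof -
    have "real n ^ 2 * g n \<le> 1" "real n > 0"
      using n0[of n] that by auto
    then show ?thesis
      by (simp add: g_def field_simps)
  qed
  have "summable g"
    by (rule summable_comparison_test'[OF inverse_power_summable g_le]) simp
  moreover have "(real (m n) + 1)\<^sup>2 \<le> (4 * real n powr s / e + 3)\<^sup>2" for n
    using m[of n] by (intro power_mono) auto
  then have "norm ((real (m n) + 1)\<^sup>2 * (2 * exp (- 2 * real n * (e / (2 * real n powr s))\<^sup>2))) \<le> g n" for n
    unfolding g_def by (simp add: mult_right_mono)
  ultimately show ?thesis
    by (rule summable_comparison_test'[where N = 0])
qed

lemma scaled_grid_error_le:
  assumes "n \<ge> 1" "\<epsilon> > 0" "4 * real n powr s / \<epsilon> \<le> real m" "z \<le> \<epsilon> / (2 * real n powr s) + 2 / real m"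
  shows "real n powr s * z \<le> \<epsilon>"
proof -
  have pos: "real n powr s > 0"
    using assms(1) by simp
  then have "real n powr s * z \<le> real n powr s * (\<epsilon> / (2 * real n powr s) + 2 / real m)"
    using assms(4) by (intro mult_left_mono) auto
  also have "\<dots> = \<epsilon> / 2 + real n powr s * (2 / real m)"
    using pos by (simp add: distrib_left)
  also have "real n powr s * (2 / real m) \<le> \<epsilon> / 2"
  proof -
    have "0 < 4 * real n powr s / \<epsilon>"
      using pos assms(2) by simp
    with assms(3) have "real m > 0"
      by linarith
    with assms(2,3) show ?thesis
      by (simp add: field_simps)
  qed
  finally show ?thesis
    by simp
qed

lemma borel_measurable_fst_snd:
  "fst \<in> borel_measurable (borel :: (real \<times> real) measure)"
  "snd \<in> borel_measurable (borel :: (real \<times> real) measure)"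
  by (intro borel_measurable_continuous_onI continuous_intros)+

section \<open>Samples of a random vector\<close>

locale iid_pair_sample = prob_space M for M :: "'a measure" +
  fixes X Y :: "nat \<Rightarrow> 'a \<Rightarrow> real"
  assumes measurable_X[measurable]: "\<And>i. X i \<in> borel_measurable M"
    and measurable_Y[measurable]: "\<And>i. Y i \<in> borel_measurable M"
    and indep: "indep_vars (\<lambda>_. borel) (\<lambda>i \<omega>. (X i \<omega>, Y i \<omega>)) UNIV"
    and ident: "\<And>i. distr M borel (\<lambda>\<omega>. (X i \<omega>, Y i \<omega>)) = distr M borel (\<lambda>\<omega>. (X 0 \<omega>, Y 0 \<omega>))"
begin

definition Z :: "nat \<Rightarrow> 'a \<Rightarrow> real \<times> real" where
  "Z i \<omega> = (X i \<omega>, Y i \<omega>)"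

lemma measurable_Z[measurable]: "Z i \<in> borel_measurable M"
  unfolding Z_def by measurable

definition law :: "(real \<times> real) measure" where
  "law = distr M borel (Z 0)"

lemma sets_law[simp]: "sets law = sets borel"
  unfolding law_def by simp

lemma space_law[simp]: "space law = UNIV"
  unfolding law_def by simp

lemma prob_space_law: "prob_space law"
  unfolding law_def by (rule prob_space_distr) simp

lemma prob_Z_in:
  assumes "D \<in> sets borel"
  shows "prob {\<omega> \<in> space M. Z i \<omega> \<in> D} = measure law D"
proof -
  have "prob {\<omega> \<in> space M. Z i \<omega> \<in> D} = measure (distr M borel (Z i)) D"
    using assms by (subst measure_distr) (auto simp: vimage_def Int_def conj_commute)
  also have "distr M borel (Z i) = law"
    using ident[of i] unfolding law_def Z_def by simp
  finally show ?thesis .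
qed

lemma prob_Z_pair_in:
  assumes "k \<noteq> l" "D \<in> sets borel"
  shows "prob {\<omega> \<in> space M. Z k \<omega> \<in> D \<and> Z l \<omega> \<in> D} = measure law D ^ 2"
proof -
  have "prob (\<Inter>i\<in>{k, l}. Z i -` D \<inter> space M) = (\<Prod>i\<in>{k, l}. prob (Z i -` D \<inter> space M))"
    using assms indep unfolding Z_def[abs_def] by (intro indep_varsD) auto
  moreover have "(\<Inter>i\<in>{k, l}. Z i -` D \<inter> space M) = {\<omega> \<in> space M. Z k \<omega> \<in> D \<and> Z l \<omega> \<in> D}"
    by auto
  moreover have "prob (Z i -` D \<inter> space M) = measure law D" for i
  proof -
    have "Z i -` D \<inter> space M = {\<omega> \<in> space M. Z i \<omega> \<in> D}"
      by auto
    then show ?thesis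
      using prob_Z_in[OF assms(2)] by simp
  qed
  ultimately show ?thesis
    using assms(1) by (simp add: power2_eq_square)
qed

lemma same_cell_event_sets:
  fixes m :: nat
  assumes "\<And>r. r < m \<Longrightarrow> C r \<in> sets borel"
  shows "{\<omega> \<in> space M. \<exists>r<m. Z k \<omega> \<in> C r \<and> Z l \<omega> \<in> C r} \<in> sets M"
proof -
  have "{\<omega> \<in> space M. \<exists>r<m. Z k \<omega> \<in> C r \<and> Z l \<omega> \<in> C r}
      = (\<Union>r<m. {\<omega> \<in> space M. Z k \<omega> \<in> C r} \<inter> {\<omega> \<in> space M. Z l \<omega> \<in> C r})"
    by blast
  also have "\<dots> \<in> sets M"
  proof (intro sets.finite_UN sets.Int)
    fix r
    assume "r \<in> {..<m}"
    then have [measurable]: "C r \<in> sets borel"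
      using assms by simp
    show "{\<omega> \<in> space M. Z k \<omega> \<in> C r} \<in> sets M" "{\<omega> \<in> space M. Z l \<omega> \<in> C r} \<in> sets M"
      by measurable
  qed simp
  finally show ?thesis .
qed

lemma prob_same_cell_le:
  assumes "k \<noteq> l" "m \<ge> 1"
    and cells: "\<And>r. r < m \<Longrightarrow> C r \<in> sets borel" "\<And>r. r < m \<Longrightarrow> measure law (C r) = 1 / real m"
  shows "prob {\<omega> \<in> space M. \<exists>r<m. Z k \<omega> \<in> C r \<and> Z l \<omega> \<in> C r} \<le> 1 / real m"
proof -
  have events: "{\<omega> \<in> space M. Z k \<omega> \<in> C r \<and> Z l \<omega> \<in> C r} \<in> sets M" if "r < m" for r
    using cells(1)[OF that] by measurable
  have "prob {\<omega> \<in> space M. \<exists>r<m. Z k \<omega> \<in> C r \<and> Z l \<omega> \<in> C r}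
      = prob (\<Union>r<m. {\<omega> \<in> space M. Z k \<omega> \<in> C r \<and> Z l \<omega> \<in> C r})"
    by (rule arg_cong[where f = prob]) auto
  also have "\<dots> \<le> (\<Sum>r<m. prob {\<omega> \<in> space M. Z k \<omega> \<in> C r \<and> Z l \<omega> \<in> C r})"
    using events by (intro finite_measure_subadditive_finite) auto
  also have "\<dots> = (\<Sum>r<m. (1 / real m) ^ 2)"
    using assms(1) cells by (intro sum.cong) (auto simp: prob_Z_pair_in)
  also have "\<dots> = 1 / real m"
    using assms(2) by (simp add: power2_eq_square)
  finally show ?thesis .
qed

definition emp_prob :: "'a \<Rightarrow> nat \<Rightarrow> (real \<times> real) set \<Rightarrow> real" where
  "emp_prob \<omega> n D = card {k. k < n \<and> Z k \<omega> \<in> D} / real n"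

lemma emp_prob_as_sum: "emp_prob \<omega> n D = (\<Sum>k<n. indicator D (Z k \<omega>)) / real n"
proof -
  have "(\<Sum>k<n. indicator D (Z k \<omega>) :: real) = (\<Sum>k\<in>{..<n} \<inter> {k. Z k \<omega> \<in> D}. 1)"
    by (simp add: sum.inter_restrict indicator_def)
  then show ?thesis
    unfolding emp_prob_def by (simp add: Int_def conj_commute)
qed

lemma emp_df_as_emp_prob:
  "emp_df (\<lambda>k. X k \<omega>) n a = emp_prob \<omega> n ({..a} \<times> UNIV)"
  "emp_df (\<lambda>k. Y k \<omega>) n b = emp_prob \<omega> n (UNIV \<times> {..b})"
  "emp_joint_df (\<lambda>k. X k \<omega>) (\<lambda>k. Y k \<omega>) n a b = emp_prob \<omega> n ({..a} \<times> {..b})"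
  unfolding emp_df_def emp_joint_df_def emp_prob_def Z_def by simp_all

lemma emp_prob_mono: "D \<subseteq> D' \<Longrightarrow> emp_prob \<omega> n D \<le> emp_prob \<omega> n D'"
  unfolding emp_prob_def by (intro divide_right_mono of_nat_mono card_mono) auto

lemma emp_prob_measurable[measurable]:
  "D \<in> sets borel \<Longrightarrow> (\<lambda>\<omega>. emp_prob \<omega> n D) \<in> borel_measurable M"
  unfolding emp_prob_as_sum
  by (intro borel_measurable_divide borel_measurable_sum measurable_compose[OF measurable_Z] borel_measurable_indicator)
    auto

lemma emp_prob_hoeffding:
  assumes D: "D \<in> sets borel" and "n \<ge> 1" "\<eta> \<ge> 0"
  shows "prob {\<omega> \<in> space M. \<eta> \<le> \<bar>emp_prob \<omega> n D - measure law D\<bar>} \<le> 2 * exp (- 2 * real n * \<eta>\<^sup>2)"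
proof -
  define W where "W k \<omega> = (indicator D (Z k \<omega>) :: real)" for k \<omega>
  have [measurable]: "W k \<in> borel_measurable M" for k
    unfolding W_def using D by measurable
  interpret W: Hoeffding_ineq_iid M "{..<n}" W "W 0" 0 1 "expectation (W 0)"
  proof unfold_locales
    have "indep_vars (\<lambda>_. borel) W UNIV"
      using indep_vars_compose2[OF indep, of "\<lambda>_. indicator D" "\<lambda>_. borel"] D
      unfolding W_def Z_def by simp
    then show "indep_vars (\<lambda>_. borel) W {..<n}"
      by (rule indep_vars_subset) auto
    fix i
    have "distr M borel (W i) = distr (distr M borel (Z i)) borel (indicator D)"
      using D by (subst distr_distr) (auto simp: W_def[abs_def] o_def)
    also have "distr M borel (Z i) = distr M borel (Z 0)"
      using ident[of i] unfolding Z_def by simp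
    also have "distr (distr M borel (Z 0)) borel (indicator D) = distr M borel (W 0)"
      using D by (subst distr_distr) (auto simp: W_def[abs_def] o_def)
    finally show "distr M borel (W i) = distr M borel (W 0)" .
  qed (auto simp: W_def indicator_def)
  have "expectation (W 0) = expectation (indicator {\<omega> \<in> space M. Z 0 \<omega> \<in> D})"
    by (rule Bochner_Integration.integral_cong) (auto simp: W_def indicator_def)
  also have "\<dots> = measure law D"
    using D by (subst Bochner_Integration.integral_indicator) (auto simp: prob_Z_in)
  finally have "expectation (W 0) = measure law D" .
  moreover have "prob {\<omega> \<in> space M. \<eta> \<le> \<bar>(\<Sum>k\<in>{..<n}. W k \<omega>) / real (card {..<n}) - expectation (W 0)\<bar>}
      \<le> 2 * exp (- 2 * real (card {..<n}) * \<eta>\<^sup>2 / (1 - 0)\<^sup>2)"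
    using assms(2,3) by (intro W.Hoeffding_ineq_abs_ge') (auto simp: lessThan_empty_iff)
  ultimately show ?thesis
    unfolding emp_prob_as_sum W_def by simp
qed

lemma deviation_event_sets:
  assumes [measurable]: "D \<in> sets borel"
  shows "{\<omega> \<in> space M. \<eta> \<le> \<bar>emp_prob \<omega> n D - measure law D\<bar>} \<in> sets M"
  by measurable

lemma grid_deviation_prob:
  assumes "n \<ge> 1" "\<eta> \<ge> 0" "\<And>r. r \<le> m \<Longrightarrow> S r \<in> sets borel" "\<And>q. q \<le> m \<Longrightarrow> T q \<in> sets borel"
  shows "prob (\<Union>(r, q)\<in>{..m} \<times> {..m}. {\<omega> \<in> space M. \<eta> \<le> \<bar>emp_prob \<omega> n (S r \<times> T q) - measure law (S r \<times> T q)\<bar>})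
    \<le> (real m + 1)\<^sup>2 * (2 * exp (- 2 * real n * \<eta>\<^sup>2))"
proof -
  have events: "{\<omega> \<in> space M. \<eta> \<le> \<bar>emp_prob \<omega> n (S r \<times> T q) - measure law (S r \<times> T q)\<bar>} \<in> sets M"
    if "r \<le> m" "q \<le> m" for r q
    using assms(3,4) that by (intro deviation_event_sets) (simp add: borel_prod[symmetric])
  define E where "E = (\<lambda>(r, q). {\<omega> \<in> space M. \<eta> \<le> \<bar>emp_prob \<omega> n (S r \<times> T q) - measure law (S r \<times> T q)\<bar>})"
  have "prob (\<Union>(E ` ({..m} \<times> {..m}))) \<le> (\<Sum>rq\<in>{..m} \<times> {..m}. prob (E rq))"
    using events by (intro finite_measure_subadditive_finite) (auto simp: E_def)
  also have "\<dots> \<le> (\<Sum>rq\<in>{..m} \<times> {..m}. 2 * exp (- 2 * real n * \<eta>\<^sup>2))"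
  proof (rule sum_mono)
    fix rq
    assume "rq \<in> {..m} \<times> {..m}"
    then show "prob (E rq) \<le> 2 * exp (- 2 * real n * \<eta>\<^sup>2)"
      using emp_prob_hoeffding[of "S (fst rq) \<times> T (snd rq)" n \<eta>] assms
      by (auto simp: E_def borel_prod[symmetric] case_prod_unfold)
  qed
  also have "\<dots> = (real m + 1)\<^sup>2 * (2 * exp (- 2 * real n * \<eta>\<^sup>2))"
    by (simp add: power2_eq_square algebra_simps)
  finally show ?thesis
    unfolding E_def .
qed

lemma law_quantile_grid_level:
  assumes "quantile_grid \<Phi> m S" "m \<ge> 1" "r \<le> m"
    and [measurable]: "\<pi> \<in> borel_measurable borel" and \<Phi>: "\<And>a. measure law (\<pi> -` {..a}) = \<Phi> a"
  shows "measure law (\<pi> -` S r) = real r / real m"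
proof -
  interpret law: prob_space law
    by (rule prob_space_law)
  show ?thesis
  proof (cases "r = 0 \<or> r = m")
    case True
    then show ?thesis
      using assms(1,2) law.prob_space unfolding quantile_grid_def by auto
  next
    case False
    then have "r \<in> {1..<m}"
      using assms(3) by auto
    then obtain \<alpha> where "S r = {..\<alpha>}" "\<Phi> \<alpha> = real r / real m"
      using assms(1) unfolding quantile_grid_def by blast
    then show ?thesis
      using \<Phi> by simp
  qed
qed

lemma law_quantile_grid_strip:
  assumes "quantile_grid \<Phi> m S" "m \<ge> 1" "r < m"
    and [measurable]: "\<pi> \<in> borel_measurable borel" and "\<And>a. measure law (\<pi> -` {..a}) = \<Phi> a"
  shows "measure law (\<pi> -` (S (Suc r) - S r)) = 1 / real m"
proof -
  interpret law: prob_space law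
    by (rule prob_space_law)
  have [measurable]: "S r \<in> sets borel" "S (Suc r) \<in> sets borel"
    using assms(1,3) by (auto intro: quantile_grid_borel)
  have "S r \<subseteq> S (Suc r)"
    using assms(1,3) unfolding quantile_grid_def by auto
  then have "measure law (\<pi> -` (S (Suc r) - S r)) = measure law (\<pi> -` S (Suc r)) - measure law (\<pi> -` S r)"
    by (subst vimage_Diff, intro law.finite_measure_Diff) (auto intro: measurable_sets_borel[OF assms(4)])
  then show ?thesis
    using law_quantile_grid_level[OF assms(1,2) _ assms(4,5)] assms(3) by (simp add: diff_divide_distrib[symmetric])
qed

lemma tie_prob_le:
  assumes [measurable]: "\<pi> \<in> borel_measurable borel" and "\<And>a. measure law (\<pi> -` {..a}) = \<Phi> a"
    and S: "quantile_grid \<Phi> m S" and "m \<ge> 1" "k \<noteq> l"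
  shows "prob {\<omega> \<in> space M. \<pi> (Z k \<omega>) = \<pi> (Z l \<omega>)} \<le> 1 / real m"
proof -
  let ?C = "\<lambda>r. \<pi> -` (S (Suc r) - S r)"
  have cells: "?C r \<in> sets borel" if "r < m" for r
    using quantile_grid_borel[OF S, of r] quantile_grid_borel[OF S, of "Suc r"] that
    by (intro measurable_sets_borel[OF assms(1)]) auto
  have "{\<omega> \<in> space M. \<pi> (Z k \<omega>) = \<pi> (Z l \<omega>)} \<subseteq> {\<omega> \<in> space M. \<exists>r<m. Z k \<omega> \<in> ?C r \<and> Z l \<omega> \<in> ?C r}"
  proof clarify
    fix \<omega>
    assume "\<omega> \<in> space M" "\<pi> (Z k \<omega>) = \<pi> (Z l \<omega>)"
    moreover obtain r where "r < m" "\<pi> (Z k \<omega>) \<in> S (Suc r) - S r"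
      using quantile_grid_cell[OF S] .
    ultimately show "\<exists>r<m. Z k \<omega> \<in> ?C r \<and> Z l \<omega> \<in> ?C r"
      by auto
  qed
  then have "prob {\<omega> \<in> space M. \<pi> (Z k \<omega>) = \<pi> (Z l \<omega>)} \<le> prob {\<omega> \<in> space M. \<exists>r<m. Z k \<omega> \<in> ?C r \<and> Z l \<omega> \<in> ?C r}"
    by (rule finite_measure_mono[OF _ same_cell_event_sets[OF cells]])
  also have "\<dots> \<le> 1 / real m"
    using cells law_quantile_grid_strip[OF S \<open>m \<ge> 1\<close> _ assms(1,2)] assms(5) \<open>m \<ge> 1\<close>
    by (intro prob_same_cell_le) auto
  finally show ?thesis .
qed

lemma no_ties_coordinate:
  assumes "\<pi> \<in> borel_measurable borel" and "\<And>a. measure law (\<pi> -` {..a}) = \<Phi> a"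
    and grids: "\<And>m. m \<ge> 1 \<Longrightarrow> \<exists>S. quantile_grid \<Phi> m S" and "k \<noteq> l"
  shows "prob {\<omega> \<in> space M. \<pi> (Z k \<omega>) = \<pi> (Z l \<omega>)} = 0"
proof -
  have tie_le: "prob {\<omega> \<in> space M. \<pi> (Z k \<omega>) = \<pi> (Z l \<omega>)} \<le> 1 / real m" if "m \<ge> 1" for m
    using grids[OF that] tie_prob_le[OF assms(1,2) _ that assms(4)] by blast
  have "prob {\<omega> \<in> space M. \<pi> (Z k \<omega>) = \<pi> (Z l \<omega>)} \<le> 0"
  proof (rule ccontr)
    assume "\<not> ?thesis"
    then obtain m where "m > 0" "inverse (real m) < prob {\<omega> \<in> space M. \<pi> (Z k \<omega>) = \<pi> (Z l \<omega>)}"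
      using ex_inverse_of_nat_less[of "prob {\<omega> \<in> space M. \<pi> (Z k \<omega>) = \<pi> (Z l \<omega>)}"] by auto
    then show False
      using tie_le[of m] by (simp add: divide_inverse)
  qed
  then show ?thesis
    using measure_nonneg[of M] by (simp add: order_antisym)
qed

end

locale copula_sample = iid_pair_sample +
  fixes H :: "real \<Rightarrow> real \<Rightarrow> real" and F G :: "real \<Rightarrow> real" and A :: "real \<Rightarrow> real \<Rightarrow> real"
  assumes joint_df: "\<And>x y. H x y = measure M {\<omega> \<in> space M. X 0 \<omega> \<le> x \<and> Y 0 \<omega> \<le> y}"
    and marginal_x: "\<And>x. F x = measure M {\<omega> \<in> space M. X 0 \<omega> \<le> x}"
    and marginal_y: "\<And>y. G y = measure M {\<omega> \<in> space M. Y 0 \<omega> \<le> y}"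
    and continuous_H: "continuous_on UNIV (\<lambda>(x, y). H x y)"
    and copula: "is_copula A" and sklar: "\<And>x y. H x y = A (F x) (G y)"
begin

lemma H_law: "H a b = measure law ({..a} \<times> {..b})"
  using prob_Z_in[of "{..a} \<times> {..b}" 0] unfolding joint_df Z_def by (simp add: borel_prod[symmetric])

lemma F_law: "F a = measure law (fst -` {..a})"
  using prob_Z_in[of "{..a} \<times> UNIV" 0] unfolding marginal_x Z_def by (simp add: vimage_fst borel_prod[symmetric])

lemma G_law: "G b = measure law (snd -` {..b})"
  using prob_Z_in[of "UNIV \<times> {..b}" 0] unfolding marginal_y Z_def by (simp add: vimage_snd borel_prod[symmetric])

lemma F_bounds: "F a \<in> {0..1}"
  unfolding marginal_x by simp

lemma G_bounds: "G b \<in> {0..1}"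
  unfolding marginal_y by simp

lemma F_cdf: "F = cdf (distr M borel (X 0))"
  unfolding cdf_def2 marginal_x[abs_def]
  by (intro ext, subst measure_distr) (auto simp: vimage_def Int_def conj_commute)

lemma G_cdf: "G = cdf (distr M borel (Y 0))"
  unfolding cdf_def2 marginal_y[abs_def]
  by (intro ext, subst measure_distr) (auto simp: vimage_def Int_def conj_commute)

lemma real_distribution_X: "real_distribution (distr M borel (X 0))"
  and real_distribution_Y: "real_distribution (distr M borel (Y 0))"
  by simp_all

lemma mono_F: "mono F"
  unfolding F_cdf mono_def
  by (intro allI impI finite_borel_measure.cdf_nondecreasing
      real_distribution.finite_borel_measure_M[OF real_distribution_X])

lemma mono_G: "mono G"
  unfolding G_cdf mono_def
  by (intro allI impI finite_borel_measure.cdf_nondecreasing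
      real_distribution.finite_borel_measure_M[OF real_distribution_Y])

lemma F_at_bot: "(F \<longlongrightarrow> 0) at_bot" and G_at_bot: "(G \<longlongrightarrow> 0) at_bot"
  unfolding F_cdf G_cdf
  by (intro finite_borel_measure.cdf_lim_at_bot real_distribution.finite_borel_measure_M
      real_distribution_X real_distribution_Y)+

lemma F_at_top: "(F \<longlongrightarrow> 1) at_top" and G_at_top: "(G \<longlongrightarrow> 1) at_top"
  unfolding F_cdf G_cdf
  by (intro real_distribution.cdf_lim_at_top_prob real_distribution_X real_distribution_Y)+

lemma continuous_F: "continuous_on UNIV F"
  using continuous_H unfolding sklar
  by (rule continuous_marginal_of_copula[OF copula _ G_at_top F_bounds G_bounds])

lemma continuous_G: "continuous_on UNIV G"
proof -
  have "continuous_on UNIV ((\<lambda>(x, y). H x y) \<circ> prod.swap)"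
    by (intro continuous_on_compose continuous_on_subset[OF continuous_H] continuous_intros) auto
  then have "continuous_on UNIV (\<lambda>(x, y). (\<lambda>u v. A v u) (G x) (F y))"
    by (simp add: o_def sklar case_prod_unfold)
  then show ?thesis
    by (rule continuous_marginal_of_copula[OF is_copula_transpose[OF copula] _ F_at_top G_bounds F_bounds])
qed

definition x_grid :: "nat \<Rightarrow> nat \<Rightarrow> real set" where
  "x_grid m = (SOME S. quantile_grid F m S)"

definition y_grid :: "nat \<Rightarrow> nat \<Rightarrow> real set" where
  "y_grid m = (SOME S. quantile_grid G m S)"

lemma quantile_grid_x_grid:
  assumes "m \<ge> 1"
  shows "quantile_grid F m (x_grid m)"
  using quantile_grid_exists[OF mono_F continuous_F F_at_bot F_at_top assms]
  unfolding x_grid_def by (rule someI_ex)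

lemma quantile_grid_y_grid:
  assumes "m \<ge> 1"
  shows "quantile_grid G m (y_grid m)"
  using quantile_grid_exists[OF mono_G continuous_G G_at_bot G_at_top assms]
  unfolding y_grid_def by (rule someI_ex)

lemma AE_no_ties: "AE \<omega> in M. inj (\<lambda>k. X k \<omega>) \<and> inj (\<lambda>k. Y k \<omega>)"
proof -
  have "AE \<omega> in M. X k \<omega> \<noteq> X l \<omega> \<and> Y k \<omega> \<noteq> Y l \<omega>" if "k \<noteq> l" for k l
  proof -
    have "prob {\<omega> \<in> space M. fst (Z k \<omega>) = fst (Z l \<omega>)} = 0"
      using borel_measurable_fst_snd F_law quantile_grid_x_grid that
      by (intro no_ties_coordinate[where \<Phi> = F]) auto
    moreover have "prob {\<omega> \<in> space M. snd (Z k \<omega>) = snd (Z l \<omega>)} = 0"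
      using borel_measurable_fst_snd G_law quantile_grid_y_grid that
      by (intro no_ties_coordinate[where \<Phi> = G]) auto
    ultimately have "AE \<omega> in M. X k \<omega> \<noteq> X l \<omega>" "AE \<omega> in M. Y k \<omega> \<noteq> Y l \<omega>"
      by (subst (asm) (1 2) prob_eq_0; simp add: Z_def; measurable)+
    then show ?thesis
      by eventually_elim simp
  qed
  then have "AE \<omega> in M. \<forall>k l. k \<noteq> l \<longrightarrow> X k \<omega> \<noteq> X l \<omega> \<and> Y k \<omega> \<noteq> Y l \<omega>"
    by (simp add: AE_all_countable)
  then show ?thesis
    by eventually_elim (auto simp: inj_def)
qed

lemma law_strip_x:
  assumes "quantile_grid F m S" "m \<ge> 1" "r < m"
  shows "measure law ((S (Suc r) - S r) \<times> UNIV) = 1 / real m"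
  using law_quantile_grid_strip[OF assms borel_measurable_fst_snd(1) F_law[symmetric]] by (simp add: vimage_fst)

lemma law_strip_y:
  assumes "quantile_grid G m T" "m \<ge> 1" "q < m"
  shows "measure law (UNIV \<times> (T (Suc q) - T q)) = 1 / real m"
  using law_quantile_grid_strip[OF assms borel_measurable_fst_snd(2) G_law[symmetric]] by (simp add: vimage_snd)

lemma emp_prob_rectangle_deviation:
  assumes "m \<ge> 1" and S: "quantile_grid F m S" and T: "quantile_grid G m T"
    and grid: "\<And>r q. r \<le> m \<Longrightarrow> q \<le> m \<Longrightarrow> \<bar>emp_prob \<omega> n (S r \<times> T q) - measure law (S r \<times> T q)\<bar> \<le> \<eta>"
    and U: "r < m" "S r \<subseteq> U" "U \<subseteq> S (Suc r)" and V: "q < m" "T q \<subseteq> V" "V \<subseteq> T (Suc q)"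
    and [measurable]: "U \<in> sets borel" "V \<in> sets borel"
  shows "\<bar>emp_prob \<omega> n (U \<times> V) - measure law (U \<times> V)\<bar> \<le> \<eta> + 2 / real m"
proof -
  interpret law: prob_space law
    by (rule prob_space_law)
  have [measurable]: "S r \<in> sets borel" "S (Suc r) \<in> sets borel" "T q \<in> sets borel" "T (Suc q) \<in> sets borel"
    using U(1) V(1) quantile_grid_borel[OF S] quantile_grid_borel[OF T] by auto
  have rect[measurable]: "A \<times> B \<in> sets borel" if "A \<in> sets borel" "B \<in> sets borel" for A B :: "real set"
    using that by (simp add: borel_prod[symmetric])
  have "S (Suc r) \<times> T (Suc q) \<subseteq> (S r \<times> T q \<union> (S (Suc r) - S r) \<times> UNIV) \<union> UNIV \<times> (T (Suc q) - T q)"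
    by auto
  then have "measure law (S (Suc r) \<times> T (Suc q))
      \<le> measure law (S r \<times> T q \<union> (S (Suc r) - S r) \<times> UNIV) + measure law (UNIV \<times> (T (Suc q) - T q))"
    by (intro order_trans[OF law.finite_measure_mono measure_Un_le]) auto
  also have "\<dots> \<le> measure law (S r \<times> T q) + 1 / real m + 1 / real m"
    using law_strip_x[OF S assms(1) U(1)] law_strip_y[OF T assms(1) V(1)]
    by (intro add_mono measure_Un_le[THEN order_trans]) auto
  finally have outer: "measure law (S (Suc r) \<times> T (Suc q)) \<le> measure law (S r \<times> T q) + 2 / real m"
    by simp
  have "emp_prob \<omega> n (S r \<times> T q) \<le> emp_prob \<omega> n (U \<times> V)" "emp_prob \<omega> n (U \<times> V) \<le> emp_prob \<omega> n (S (Suc r) \<times> T (Suc q))"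
    using U V by (auto intro!: emp_prob_mono)
  moreover have "measure law (S r \<times> T q) \<le> measure law (U \<times> V)" "measure law (U \<times> V) \<le> measure law (S (Suc r) \<times> T (Suc q))"
    using U V by (auto intro!: law.finite_measure_mono)
  ultimately show ?thesis
    using outer grid[of r q] grid[of "Suc r" "Suc q"] U(1) V(1) by (simp add: abs_le_iff)
qed

lemma grid_controls_quadrants:
  assumes "m \<ge> 1"
    and grid: "\<And>r q. r \<le> m \<Longrightarrow> q \<le> m \<Longrightarrow>
       \<bar>emp_prob \<omega> n (x_grid m r \<times> y_grid m q) - measure law (x_grid m r \<times> y_grid m q)\<bar> \<le> \<eta>"
  shows "\<bar>emp_prob \<omega> n ({..a} \<times> {..b}) - measure law ({..a} \<times> {..b})\<bar> \<le> \<eta> + 2 / real m"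
    and "\<bar>emp_prob \<omega> n ({..a} \<times> UNIV) - measure law ({..a} \<times> UNIV)\<bar> \<le> \<eta> + 2 / real m"
    and "\<bar>emp_prob \<omega> n (UNIV \<times> {..b}) - measure law (UNIV \<times> {..b})\<bar> \<le> \<eta> + 2 / real m"
proof -
  note S = quantile_grid_x_grid[OF assms(1)] and T = quantile_grid_y_grid[OF assms(1)]
  note deviation = emp_prob_rectangle_deviation[OF assms(1) S T]
  obtain r where r: "r < m" "x_grid m r \<subseteq> {..a}" "{..a} \<subseteq> x_grid m (Suc r)"
    using quantile_grid_cover(1)[OF S assms(1)] by blast
  obtain r' where r': "r' < m" "x_grid m r' \<subseteq> UNIV" "UNIV \<subseteq> x_grid m (Suc r')"
    using quantile_grid_cover(2)[OF S assms(1)] by blast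
  obtain q where q: "q < m" "y_grid m q \<subseteq> {..b}" "{..b} \<subseteq> y_grid m (Suc q)"
    using quantile_grid_cover(1)[OF T assms(1)] by blast
  obtain q' where q': "q' < m" "y_grid m q' \<subseteq> UNIV" "UNIV \<subseteq> y_grid m (Suc q')"
    using quantile_grid_cover(2)[OF T assms(1)] by blast
  show "\<bar>emp_prob \<omega> n ({..a} \<times> {..b}) - measure law ({..a} \<times> {..b})\<bar> \<le> \<eta> + 2 / real m"
    by (rule deviation[OF _ r q]) (auto intro: grid)
  show "\<bar>emp_prob \<omega> n ({..a} \<times> UNIV) - measure law ({..a} \<times> UNIV)\<bar> \<le> \<eta> + 2 / real m"
    by (rule deviation[OF _ r q']) (auto intro: grid)
  show "\<bar>emp_prob \<omega> n (UNIV \<times> {..b}) - measure law (UNIV \<times> {..b})\<bar> \<le> \<eta> + 2 / real m"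
    by (rule deviation[OF _ r' q]) (auto intro: grid)
qed

lemma AE_eventually_grid_close:
  assumes m: "\<And>n. m n \<ge> 1" and \<eta>: "\<And>n. \<eta> n \<ge> 0"
    and summable: "summable (\<lambda>n. (real (m n) + 1)\<^sup>2 * (2 * exp (- 2 * real n * (\<eta> n)\<^sup>2)))"
  shows "AE \<omega> in M. eventually (\<lambda>n. \<forall>r\<le>m n. \<forall>q\<le>m n.
      \<bar>emp_prob \<omega> n (x_grid (m n) r \<times> y_grid (m n) q) - measure law (x_grid (m n) r \<times> y_grid (m n) q)\<bar> \<le> \<eta> n)
    sequentially"
proof -
  define bad where "bad n = (\<Union>(r, q)\<in>{..m n} \<times> {..m n}. {\<omega> \<in> space M.
      \<eta> n \<le> \<bar>emp_prob \<omega> n (x_grid (m n) r \<times> y_grid (m n) q) - measure law (x_grid (m n) r \<times> y_grid (m n) q)\<bar>})" for n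
  have grid_borel: "x_grid (m n) r \<in> sets borel" "y_grid (m n) r \<in> sets borel" if "r \<le> m n" for n r
    using quantile_grid_borel[OF quantile_grid_x_grid[OF m] that]
      quantile_grid_borel[OF quantile_grid_y_grid[OF m] that] by auto
  have bad_sets: "bad n \<in> sets M" for n
    unfolding bad_def using grid_borel
    by (intro sets.finite_UN) (auto intro!: deviation_event_sets simp: borel_prod[symmetric])
  have "measure M (bad n) \<le> (real (m n) + 1)\<^sup>2 * (2 * exp (- 2 * real n * (\<eta> n)\<^sup>2))" if "n \<ge> 1" for n
    unfolding bad_def using that \<eta> grid_borel by (intro grid_deviation_prob) auto
  then have "summable (\<lambda>n. measure M (bad n))"
    by (intro summable_comparison_test'[OF summable, of 1]) auto
  then have "AE \<omega> in M. eventually (\<lambda>n. \<omega> \<in> space M - bad n) sequentially"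
    using bad_sets by (intro borel_cantelli_AE1) (auto simp: less_top[symmetric])
  then show ?thesis
    by (elim eventually_mono) (auto simp: bad_def not_le intro: less_imp_le)
qed

lemma AE_quadrant_rate:
  assumes s: "0 < s" "s < 1 / 2" and "\<epsilon> > 0"
  shows "AE \<omega> in M. eventually (\<lambda>n. \<forall>a b.
      real n powr s * \<bar>emp_prob \<omega> n ({..a} \<times> {..b}) - measure law ({..a} \<times> {..b})\<bar> \<le> \<epsilon> \<and>
      real n powr s * \<bar>emp_prob \<omega> n ({..a} \<times> UNIV) - measure law ({..a} \<times> UNIV)\<bar> \<le> \<epsilon> \<and>
      real n powr s * \<bar>emp_prob \<omega> n (UNIV \<times> {..b}) - measure law (UNIV \<times> {..b})\<bar> \<le> \<epsilon>) sequentially"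
proof -
  \<comment> \<open>About \<open>4 n\<^sup>s/\<epsilon>\<close> grid levels and tolerance \<open>\<epsilon>/(2 n\<^sup>s)\<close>: after scaling by \<open>n\<^sup>s\<close> each error
    term is at most \<open>\<epsilon>/2\<close>, and the Hoeffding bounds stay summable because \<open>s < 1/2\<close>.\<close>
  define m where "m n = nat \<lceil>4 * real n powr s / \<epsilon>\<rceil> + 1" for n :: nat
  define \<eta> where "\<eta> n = \<epsilon> / (2 * real n powr s)" for n :: nat
  have m: "m n \<ge> 1" "4 * real n powr s / \<epsilon> \<le> real (m n)" "real (m n) + 1 \<le> 4 * real n powr s / \<epsilon> + 3" for n
  proof -
    have "0 \<le> 4 * real n powr s / \<epsilon>"
      using \<open>\<epsilon> > 0\<close> by simp
    then have "real (m n) = real_of_int \<lceil>4 * real n powr s / \<epsilon>\<rceil> + 1"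
      unfolding m_def by simp
    then show "m n \<ge> 1" "4 * real n powr s / \<epsilon> \<le> real (m n)" "real (m n) + 1 \<le> 4 * real n powr s / \<epsilon> + 3"
      using le_of_int_ceiling[of "4 * real n powr s / \<epsilon>"] of_int_ceiling_le_add_one[of "4 * real n powr s / \<epsilon>"]
      unfolding m_def by linarith+
  qed
  have "AE \<omega> in M. eventually (\<lambda>n. \<forall>r\<le>m n. \<forall>q\<le>m n.
      \<bar>emp_prob \<omega> n (x_grid (m n) r \<times> y_grid (m n) q) - measure law (x_grid (m n) r \<times> y_grid (m n) q)\<bar> \<le> \<eta> n)
    sequentially"
    using summable_grid_hoeffding_bound[OF s \<open>\<epsilon> > 0\<close> m(3)] m(1) \<open>\<epsilon> > 0\<close> unfolding \<eta>_def
    by (intro AE_eventually_grid_close) auto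
  then show ?thesis
  proof (rule eventually_mono)
    fix \<omega>
    assume "eventually (\<lambda>n. \<forall>r\<le>m n. \<forall>q\<le>m n.
      \<bar>emp_prob \<omega> n (x_grid (m n) r \<times> y_grid (m n) q) - measure law (x_grid (m n) r \<times> y_grid (m n) q)\<bar> \<le> \<eta> n)
      sequentially"
    with eventually_ge_at_top[of 1] show "eventually (\<lambda>n. \<forall>a b.
      real n powr s * \<bar>emp_prob \<omega> n ({..a} \<times> {..b}) - measure law ({..a} \<times> {..b})\<bar> \<le> \<epsilon> \<and>
      real n powr s * \<bar>emp_prob \<omega> n ({..a} \<times> UNIV) - measure law ({..a} \<times> UNIV)\<bar> \<le> \<epsilon> \<and>
      real n powr s * \<bar>emp_prob \<omega> n (UNIV \<times> {..b}) - measure law (UNIV \<times> {..b})\<bar> \<le> \<epsilon>) sequentially"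
    proof eventually_elim
      case (elim n)
      have "\<bar>emp_prob \<omega> n (x_grid (m n) r \<times> y_grid (m n) q) - measure law (x_grid (m n) r \<times> y_grid (m n) q)\<bar>
          \<le> \<eta> n" if "r \<le> m n" "q \<le> m n" for r q
        using elim(2) that by blast
      note quadrants = grid_controls_quadrants[OF m(1) this]
      show ?case
        using scaled_grid_error_le[OF elim(1) \<open>\<epsilon> > 0\<close> m(2)] quadrants unfolding \<eta>_def by blast
    qed
  qed
qed

lemma AE_emp_df_rate:
  assumes "0 < s" "s < 1 / 2"
  shows "AE \<omega> in M. \<forall>\<epsilon>>0. eventually (\<lambda>n. \<forall>a b.
      real n powr s * \<bar>emp_joint_df (\<lambda>k. X k \<omega>) (\<lambda>k. Y k \<omega>) n a b - A (F a) (G b)\<bar> \<le> \<epsilon> \<and>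
      real n powr s * \<bar>emp_df (\<lambda>k. X k \<omega>) n a - F a\<bar> \<le> \<epsilon> \<and>
      real n powr s * \<bar>emp_df (\<lambda>k. Y k \<omega>) n b - G b\<bar> \<le> \<epsilon>) sequentially"
proof -
  have "AE \<omega> in M. \<forall>j::nat. eventually (\<lambda>n. \<forall>a b.
      real n powr s * \<bar>emp_prob \<omega> n ({..a} \<times> {..b}) - measure law ({..a} \<times> {..b})\<bar> \<le> 1 / Suc j \<and>
      real n powr s * \<bar>emp_prob \<omega> n ({..a} \<times> UNIV) - measure law ({..a} \<times> UNIV)\<bar> \<le> 1 / Suc j \<and>
      real n powr s * \<bar>emp_prob \<omega> n (UNIV \<times> {..b}) - measure law (UNIV \<times> {..b})\<bar> \<le> 1 / Suc j) sequentially"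
    unfolding AE_all_countable by (intro allI AE_quadrant_rate[OF assms]) simp
  then show ?thesis
  proof (rule eventually_mono, intro allI impI)
    fix \<omega> and \<epsilon> :: real
    assume rates: "\<forall>j::nat. eventually (\<lambda>n. \<forall>a b.
      real n powr s * \<bar>emp_prob \<omega> n ({..a} \<times> {..b}) - measure law ({..a} \<times> {..b})\<bar> \<le> 1 / Suc j \<and>
      real n powr s * \<bar>emp_prob \<omega> n ({..a} \<times> UNIV) - measure law ({..a} \<times> UNIV)\<bar> \<le> 1 / Suc j \<and>
      real n powr s * \<bar>emp_prob \<omega> n (UNIV \<times> {..b}) - measure law (UNIV \<times> {..b})\<bar> \<le> 1 / Suc j) sequentially"
      and "\<epsilon> > 0"
    then obtain j :: nat where "1 / Suc j < \<epsilon>"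
      using nat_approx_posE by blast
    then have le: "x \<le> \<epsilon>" if "x \<le> 1 / Suc j" for x
      using that by linarith
    from rates[rule_format, of j] show "eventually (\<lambda>n. \<forall>a b.
      real n powr s * \<bar>emp_joint_df (\<lambda>k. X k \<omega>) (\<lambda>k. Y k \<omega>) n a b - A (F a) (G b)\<bar> \<le> \<epsilon> \<and>
      real n powr s * \<bar>emp_df (\<lambda>k. X k \<omega>) n a - F a\<bar> \<le> \<epsilon> \<and>
      real n powr s * \<bar>emp_df (\<lambda>k. Y k \<omega>) n b - G b\<bar> \<le> \<epsilon>) sequentially"
      unfolding emp_df_as_emp_prob sklar[symmetric] H_law unfolding F_law G_law vimage_fst vimage_snd
      by (elim eventually_mono) (blast intro: le)
  qed
qed

end

lemma floor_powr_asymptotics: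
  fixes s :: real
  assumes "0 < s" "s < 1"
  shows "filterlim (\<lambda>n. nat \<lfloor>real n powr s\<rfloor>) at_top sequentially"
    and "(\<lambda>n. real (nat \<lfloor>real n powr s\<rfloor>) / real n) \<longlonglongrightarrow> 0"
proof -
  have "filterlim (\<lambda>n. real n powr s) at_top sequentially"
    using assms by real_asymp
  then have "filterlim (\<lambda>n. \<lfloor>real n powr s\<rfloor>) at_top sequentially"
    by (rule filterlim_compose[OF filterlim_floor_sequentially])
  then show "filterlim (\<lambda>n. nat \<lfloor>real n powr s\<rfloor>) at_top sequentially"
    by (rule filterlim_compose[OF filterlim_nat_sequentially])
  have upper: "(\<lambda>n. real n powr s / real n) \<longlonglongrightarrow> 0"
    using assms by real_asymp
  have "real (nat \<lfloor>real n powr s\<rfloor>) / real n \<le> real n powr s / real n" for n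
    by (intro divide_right_mono) auto
  then show "(\<lambda>n. real (nat \<lfloor>real n powr s\<rfloor>) / real n) \<longlonglongrightarrow> 0"
    by (intro tendsto_sandwich[OF _ _ tendsto_const upper] always_eventually allI) auto
qed

theorem theorem3p1:
  fixes M :: "'a measure"
    and X Y :: "nat \<Rightarrow> 'a \<Rightarrow> real"
    and H :: "real \<Rightarrow> real \<Rightarrow> real" and F G :: "real \<Rightarrow> real"
    and A :: "real \<Rightarrow> real \<Rightarrow> real" and KA :: "real \<Rightarrow> real measure"
    and KH :: "real \<Rightarrow> real \<Rightarrow> real"
    and s :: real
  assumes "prob_space M"
    and "\<And>i. X i \<in> borel_measurable M" and "\<And>i. Y i \<in> borel_measurable M"
    and "prob_space.indep_vars M (\<lambda>_. borel) (\<lambda>i \<omega>. (X i \<omega>, Y i \<omega>)) UNIV"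
    and "\<And>i. distr M borel (\<lambda>\<omega>. (X i \<omega>, Y i \<omega>)) = distr M borel (\<lambda>\<omega>. (X 0 \<omega>, Y 0 \<omega>))"
    and "\<And>x y. H x y = measure M {\<omega> \<in> space M. X 0 \<omega> \<le> x \<and> Y 0 \<omega> \<le> y}"
    and "\<And>x. F x = measure M {\<omega> \<in> space M. X 0 \<omega> \<le> x}"
    and "\<And>y. G y = measure M {\<omega> \<in> space M. Y 0 \<omega> \<le> y}"
    and "continuous_on UNIV (\<lambda>(x, y). H x y)"
    and "is_copula A" and "\<And>x y. H x y = A (F x) (G y)"
    and "continuous_markov_kernel_of A KA"
    and "\<And>x y. KH x y = measure (KA (F x)) {0..G y}"
    and "0 < s" and "s < 1 / 2"
  shows "AE \<omega> in M.
    (\<lambda>n. SUP p \<in> (UNIV :: (real \<times> real) set).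
        \<bar>cb_kernel (nat \<lfloor>real n powr s\<rfloor>) (emp_copula (\<lambda>k. X k \<omega>) (\<lambda>k. Y k \<omega>) n)
            (emp_df (\<lambda>k. X k \<omega>) n (fst p)) (emp_df (\<lambda>k. Y k \<omega>) n (snd p))
         - KH (fst p) (snd p)\<bar>) \<longlonglongrightarrow> 0"
proof -
  interpret copula_sample M X Y H F G A
    by (intro copula_sample.intro iid_pair_sample.intro iid_pair_sample_axioms.intro copula_sample_axioms.intro)
      (fact assms)+
  note N = floor_powr_asymptotics[of s]
  show ?thesis
    using AE_no_ties AE_emp_df_rate[OF assms(14,15)]
  proof eventually_elim
    case (elim \<omega>)
    then show ?case
      unfolding assms(13) using assms(14,15)
      by (intro cb_emp_kernel_uniform_limit[OF copula assms(12) _ _ F_bounds G_bounds N, where R = "\<lambda>n. real n powr s"])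
        auto
  qed
qed

end
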